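(* Let $0<p<1$ and $u_0\equiv0$. Then problem (P) has a solution, defined on some interval $[0,t_0)$ with $t_0>0$, which is not identically zero. Hence (P) with $u_0\equiv0$ does not have uniqueness.
   Context: Standing assumptions: $\Omega\subset\mathbb{R}^N$ bounded, connected, smooth; $J\in C(\mathbb{R}^N)$, $J\ge0$ symmetric, $\int J=1$, $J>0$ on $B(0,d)$, $J=0$ outside $B(0,d)$. There is $s_0>d$ such that $y=z+s\eta(z)$, $z\in\partial\Omega$, $s\in(0,s_0)$ ($\eta$ exterior unit normal) give coordinates on a neighborhood of $\partial\Omega$ in $\mathbb{R}^N\setminus\Omega$; $\overline u(z+s\eta(z),t)=u(z,t)$. Problem (P): $u_t(x,t)=\int_\Omega J(x-y)(u(y,t)-u(x,t))dy+\int_{\mathbb{R}^N\setminus\Omega}J(x-y)\overline u^p(y,t)dy$ for $x\in\overline\Omega$, $u(x,0)=u_0(x)$; a solution on $[0,t_0)$ is a nonnegative continuous function on $\overline\Omega\times[0,t_0)$, differentiable in $t$, satisfying (P). *)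

theory Defs
  imports "HOL-Analysis.Analysis"
begin

definition kernel_ok :: "('a::euclidean_space \<Rightarrow> real) \<Rightarrow> real \<Rightarrow> bool" where
  "kernel_ok J d \<longleftrightarrow> d > 0 \<and> continuous_on UNIV J \<and> (\<forall>x. J x \<ge> 0) \<and> (\<forall>x. J (- x) = J x)
     \<and> (J has_integral 1) UNIV \<and> (\<forall>x. norm x < d \<longrightarrow> J x > 0) \<and> (\<forall>x. norm x \<ge> d \<longrightarrow> J x = 0)"

definition domain_ok :: "'a::euclidean_space set \<Rightarrow> ('a \<Rightarrow> 'a) \<Rightarrow> real \<Rightarrow> real \<Rightarrow> bool" where
  "domain_ok \<Omega> \<eta> s0 d \<longleftrightarrow> open \<Omega> \<and> bounded \<Omega> \<and> connected \<Omega> \<and> \<Omega> \<noteq> {} \<and> s0 > d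
     \<and> continuous_on (frontier \<Omega>) \<eta> \<and> (\<forall>z\<in>frontier \<Omega>. norm (\<eta> z) = 1)
     \<and> bij_betw (\<lambda>(z, s). z + s *\<^sub>R \<eta> z) (frontier \<Omega> \<times> {0<..<s0})
         {y. y \<notin> closure \<Omega> \<and> infdist y \<Omega> < s0}"

text \<open>The extension \<open>\<overline>u(z + s \<eta>(z), t) = u(z, t)\<close>; on the boundary itself (s = 0) it is u;
  elsewhere (never reached by the kernel) it is set to 0.\<close>
definition ext_u :: "'a::euclidean_space set \<Rightarrow> ('a \<Rightarrow> 'a) \<Rightarrow> real \<Rightarrow> ('a \<Rightarrow> real \<Rightarrow> real) \<Rightarrow> 'a \<Rightarrow> real \<Rightarrow> real" where
  "ext_u \<Omega> \<eta> s0 u y t =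
     (if y \<in> frontier \<Omega> then u y t
      else if (\<exists>z s. z \<in> frontier \<Omega> \<and> 0 < s \<and> s < s0 \<and> y = z + s *\<^sub>R \<eta> z)
      then u (THE z. \<exists>s. z \<in> frontier \<Omega> \<and> 0 < s \<and> s < s0 \<and> y = z + s *\<^sub>R \<eta> z) t
      else 0)"

definition is_solution_P ::
  "'a::euclidean_space set \<Rightarrow> ('a \<Rightarrow> real) \<Rightarrow> ('a \<Rightarrow> 'a) \<Rightarrow> real \<Rightarrow> real \<Rightarrow> ('a \<Rightarrow> real)
    \<Rightarrow> real \<Rightarrow> ('a \<Rightarrow> real \<Rightarrow> real) \<Rightarrow> bool" where
  "is_solution_P \<Omega> J \<eta> s0 p u0 t0 u \<longleftrightarrow>
     (\<forall>x\<in>closure \<Omega>. \<forall>t\<in>{0..<t0}. u x t \<ge> 0)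
     \<and> continuous_on (closure \<Omega> \<times> {0..<t0}) (\<lambda>(x, t). u x t)
     \<and> (\<forall>x\<in>closure \<Omega>. u x 0 = u0 x)
     \<and> (\<forall>x\<in>closure \<Omega>. \<forall>t\<in>{0..<t0}.
          (u x has_real_derivative
             (integral \<Omega> (\<lambda>y. J (x - y) * (u y t - u x t))
              + integral (- \<Omega>) (\<lambda>y. J (x - y) * (ext_u \<Omega> \<eta> s0 u y t) powr p)))
          (at t within {0..<t0}))"

end

theory Submission
  imports Defs
begin

(* Write A(x) = int_Omega J(x - y) dy.  Problem (P) says u_t + A u = G u, where
   G u (x, t) = int_Omega J(x - y) u(y, t) dy + int_(R^N - Omega) J(x - y) ubar(y, t)^p dy
   is monotone in u; so the solutions on [0, T] are the fixed points of the monotone map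
   Phi u (x, t) = int_0^t exp (-A(x) (t - s)) G u (x, s) ds.
   Because p < 1 the boundary flux can lift u off zero: if beta > 0 bounds the exterior kernel
   mass from below on the boundary, then phi(t) = (c t)^(1/(1-p)) with c = beta / 2^(1/(1-p)+1)
   satisfies Phi u >= phi on the boundary whenever u >= phi there.  Iterating Phi from the
   function that is phi on the boundary and 0 elsewhere gives an increasing sequence bounded by 1,
   whose limit is a fixed point by dominated convergence: a solution with zero initial data that
   is positive on the boundary for t > 0, whereas u = 0 is also a solution. *)

lemma has_integral_translate_UNIV:
  fixes f :: "'a::euclidean_space \<Rightarrow> real"
  assumes "f \<in> borel_measurable borel" and "f absolutely_integrable_on UNIV"
  shows "((\<lambda>x. f (c + x)) has_integral integral UNIV f) UNIV"
proof -
  have "integrable lebesgue f"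
    using assms(2) by (simp add: set_integrable_def)
  then have f: "integrable lborel f"
    using assms(1) by (simp add: integrable_completion)
  have "integrable (distr lborel borel ((+) c)) f"
    by (simp add: lborel_distr_plus f)
  then have fc: "integrable lborel (\<lambda>x. f (c + x))"
    using assms(1) by (subst (asm) integrable_distr_eq) auto
  have "integral\<^sup>L lborel (\<lambda>x. f (c + x)) = integral\<^sup>L (distr lborel borel ((+) c)) f"
    using assms(1) by (simp add: integral_distr)
  also have "\<dots> = integral UNIV f"
    by (simp add: lborel_distr_plus integral_lborel f)
  finally show ?thesis
    using has_integral_integral_lborel[OF fc] by simp
qed

lemma uniformly_continuous_on_UNIV_if_vanishing:
  fixes f :: "'a::euclidean_space \<Rightarrow> real"
  assumes f: "continuous_on UNIV f" and vanish: "\<And>x. norm x \<ge> R \<Longrightarrow> f x = 0"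
  shows "uniformly_continuous_on UNIV f"
  unfolding uniformly_continuous_on_def
proof (intro allI impI)
  fix e :: real assume "e > 0"
  have "uniformly_continuous_on (cball 0 (R + 1)) f"
    by (rule compact_uniformly_continuous) (auto intro: continuous_on_subset[OF f])
  then obtain \<delta> where \<delta>: "\<delta> > 0"
    "\<And>x x'. x \<in> cball 0 (R + 1) \<Longrightarrow> x' \<in> cball 0 (R + 1) \<Longrightarrow> dist x' x < \<delta> \<Longrightarrow> dist (f x') (f x) < e"
    using \<open>e > 0\<close> unfolding uniformly_continuous_on_def by metis
  have "dist (f x') (f x) < e" if "dist x' x < min \<delta> 1" for x x'
  proof (cases "norm x \<le> R + 1 \<and> norm x' \<le> R + 1")
    case True
    then show ?thesis using \<delta>(2) that by simp
  next
    case False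
    have "\<bar>norm x' - norm x\<bar> < 1"
      using that norm_triangle_ineq3[of x' x] by (simp add: dist_norm)
    then have "f x = 0 \<and> f x' = 0" using False vanish by force
    then show ?thesis using \<open>e > 0\<close> by simp
  qed
  then show "\<exists>d>0. \<forall>x\<in>UNIV. \<forall>x'\<in>UNIV. dist x' x < d \<longrightarrow> dist (f x') (f x) < e"
    using \<open>\<delta> > 0\<close> by (intro exI[of _ "min \<delta> 1"]) auto
qed

lemma abs_exp_diff_le:
  fixes a b c :: real
  assumes "a \<le> c" and "b \<le> c"
  shows "\<bar>exp a - exp b\<bar> \<le> exp c * \<bar>a - b\<bar>"
proof -
  have *: "exp y - exp x \<le> exp c * (y - x)" if "x \<le> y" "y \<le> c" for x y :: real
  proof -
    have "exp y - exp x = exp y * (1 - exp (x - y))"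
      by (simp add: exp_diff field_simps)
    also have "\<dots> \<le> exp y * (y - x)"
      using exp_ge_add_one_self[of "x - y"] by (intro mult_left_mono) (linarith, simp)
    also have "\<dots> \<le> exp c * (y - x)"
      using that by (intro mult_right_mono) auto
    finally show ?thesis .
  qed
  show ?thesis
    using *[of a b] *[of b a] assms by (cases "a \<le> b") auto
qed

lemma abs_integral_le_length:
  fixes f :: "real \<Rightarrow> real"
  assumes "f integrable_on {a..b}" and "a \<le> b" and "\<And>s. s \<in> {a..b} \<Longrightarrow> \<bar>f s\<bar> \<le> B"
  shows "\<bar>integral {a..b} f\<bar> \<le> B * (b - a)"
  using integral_norm_bound_integral[OF assms(1) integrable_const_ivl[of B a b]] assms(2,3)
  by (simp add: mult.commute)

lemma abs_integral_upper_limit_diff_le: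
  fixes f :: "real \<Rightarrow> real"
  assumes "f integrable_on {a..b}" and "t \<in> {a..b}" and "t' \<in> {a..b}"
    and "\<And>s. s \<in> {a..b} \<Longrightarrow> \<bar>f s\<bar> \<le> M"
  shows "\<bar>integral {a..t'} f - integral {a..t} f\<bar> \<le> M * \<bar>t' - t\<bar>"
proof -
  have int_sub: "f integrable_on {c..c'}" if "a \<le> c" "c' \<le> b" for c c'
    by (rule integrable_on_subinterval[OF assms(1)]) (use that in auto)
  have "integral {a..max t t'} f = integral {a..min t t'} f + integral {min t t'..max t t'} f"
    using assms(2,3) by (intro Henstock_Kurzweil_Integration.integral_combine[symmetric] int_sub) auto
  moreover have "\<bar>integral {min t t'..max t t'} f\<bar> \<le> M * (max t t' - min t t')"
    using assms(2-4) by (intro abs_integral_le_length int_sub) (auto simp: min_def max_def split: if_splits)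
  ultimately show ?thesis
    by (cases "t \<le> t'") (auto simp: max_def min_def)
qed

lemma continuous_on_parametric_integral:
  fixes F :: "'a::metric_space \<Rightarrow> real \<Rightarrow> real"
  assumes int: "\<And>x. x \<in> X \<Longrightarrow> F x integrable_on {a..b}"
    and bound: "\<And>x s. x \<in> X \<Longrightarrow> s \<in> {a..b} \<Longrightarrow> \<bar>F x s\<bar> \<le> M"
    and equicont: "\<And>x e. x \<in> X \<Longrightarrow> e > 0 \<Longrightarrow>
        \<exists>\<delta>>0. \<forall>x'\<in>X. dist x' x < \<delta> \<longrightarrow> (\<forall>s\<in>{a..b}. \<bar>F x' s - F x s\<bar> \<le> e)"
  shows "continuous_on (X \<times> {a..b}) (\<lambda>(x, t). integral {a..t} (F x))"
  unfolding continuous_on_iff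
proof (intro ballI allI impI)
  fix q e assume q: "q \<in> X \<times> {a..b}" and "(0::real) < e"
  obtain x t where [simp]: "q = (x, t)" and x: "x \<in> X" and t: "t \<in> {a..b}"
    using q by auto
  have "M \<ge> 0" using bound[OF x, of t] t by linarith
  have int_sub: "F y integrable_on {c..c'}" if "y \<in> X" "a \<le> c" "c' \<le> b" for y c c'
    by (rule integrable_on_subinterval[OF int[OF that(1)]]) (use that in auto)
  define e' where "e' = e / (2 * (b - a + 1))"
  have "e' > 0" using \<open>e > 0\<close> t by (simp add: e'_def)
  obtain \<delta> where "\<delta> > 0" and \<delta>: "\<And>x'. x' \<in> X \<Longrightarrow> dist x' x < \<delta> \<Longrightarrow> \<forall>s\<in>{a..b}. \<bar>F x' s - F x s\<bar> \<le> e'"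
    using equicont[OF x \<open>e' > 0\<close>] by auto
  have close: "dist (integral {a..t'} (F x')) (integral {a..t} (F x)) < e"
    if x': "x' \<in> X" "dist x' x < \<delta>" and t': "t' \<in> {a..b}" "\<bar>t' - t\<bar> < e / (2 * (M + 1))" for x' t'
  proof -
    have "\<bar>integral {a..t'} (\<lambda>s. F x' s - F x s)\<bar> \<le> e' * (t' - a)"
      using t' \<delta>[OF x'] by (intro abs_integral_le_length integrable_diff int_sub x'(1) x) auto
    also have "\<dots> \<le> e' * (b - a + 1)"
      using t' \<open>e' > 0\<close> by (intro mult_left_mono) auto
    also have "\<dots> = e / 2"
      using t by (simp add: e'_def field_simps)
    finally have dx: "\<bar>integral {a..t'} (F x') - integral {a..t'} (F x)\<bar> \<le> e / 2"
      using t' by (simp add: integral_diff int_sub x x')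
    have "\<bar>integral {a..t'} (F x) - integral {a..t} (F x)\<bar> \<le> M * \<bar>t' - t\<bar>"
      using int[OF x] t t'(1) bound[OF x] by (rule abs_integral_upper_limit_diff_le)
    also have "\<dots> < e / 2"
      using t'(2) \<open>M \<ge> 0\<close> \<open>e > 0\<close> by (simp add: field_simps) (smt (verit) mult_left_mono)
    finally show ?thesis
      using dx abs_triangle_ineq[of "integral {a..t'} (F x') - integral {a..t'} (F x)"
          "integral {a..t'} (F x) - integral {a..t} (F x)"]
      by (simp add: dist_real_def)
  qed
  show "\<exists>d>0. \<forall>q'\<in>X \<times> {a..b}. dist q' q < d \<longrightarrow>
      dist ((\<lambda>(x, t). integral {a..t} (F x)) q') ((\<lambda>(x, t). integral {a..t} (F x)) q) < e"
  proof (intro exI[of _ "min \<delta> (e / (2 * (M + 1)))"] conjI ballI impI)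
    show "min \<delta> (e / (2 * (M + 1))) > 0"
      using \<open>\<delta> > 0\<close> \<open>e > 0\<close> \<open>M \<ge> 0\<close> by auto
    fix q' assume "q' \<in> X \<times> {a..b}" and q'_close: "dist q' q < min \<delta> (e / (2 * (M + 1)))"
    then obtain x' t' where [simp]: "q' = (x', t')" and "x' \<in> X" "t' \<in> {a..b}"
      by auto
    moreover have "dist x' x < \<delta>" "\<bar>t' - t\<bar> < e / (2 * (M + 1))"
      using q'_close dist_fst_le[of q' q] dist_snd_le[of q' q] by (auto simp: dist_real_def)
    ultimately show "dist ((\<lambda>(x, t). integral {a..t} (F x)) q') ((\<lambda>(x, t). integral {a..t} (F x)) q) < e"
      using close by simp
  qed
qed

lemma uniform_modulus_in_second_argument:
  fixes f :: "'a::metric_space \<times> real \<Rightarrow> real"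
  assumes "compact K" and "compact I" and "continuous_on (K \<times> I) f" and "e > 0"
  obtains \<delta> where "\<delta> > 0"
    and "\<And>y s s'. y \<in> K \<Longrightarrow> s \<in> I \<Longrightarrow> s' \<in> I \<Longrightarrow> \<bar>s' - s\<bar> < \<delta> \<Longrightarrow> \<bar>f (y, s') - f (y, s)\<bar> < e"
proof -
  have "uniformly_continuous_on (K \<times> I) f"
    using assms(1-3) by (intro compact_uniformly_continuous compact_Times)
  then obtain \<delta> where "\<delta> > 0"
    and \<delta>: "\<And>q q'. q \<in> K \<times> I \<Longrightarrow> q' \<in> K \<times> I \<Longrightarrow> dist q' q < \<delta> \<Longrightarrow> dist (f q') (f q) < e"
    using assms(4) unfolding uniformly_continuous_on_def by metis
  show ?thesis
  proof (rule that[OF \<open>\<delta> > 0\<close>])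
    fix y s s' assume "y \<in> K" "s \<in> I" "s' \<in> I" "\<bar>s' - s\<bar> < \<delta>"
    then show "\<bar>f (y, s') - f (y, s)\<bar> < e"
      using \<delta>[of "(y, s)" "(y, s')"] by (simp add: dist_Pair_Pair dist_real_def)
  qed
qed

lemma eventually_in_inner_intervals:
  fixes s c :: real
  assumes "0 < s" and "s < c"
  shows "\<exists>n. \<forall>m\<ge>n. s \<in> {c / (real m + 2) .. c - c / (real m + 2)}"
proof -
  define \<mu> where "\<mu> = min s (c - s)"
  have "\<mu> > 0" using assms by (simp add: \<mu>_def)
  obtain n :: nat where n: "c / \<mu> < n"
    using reals_Archimedean2 by blast
  have "s \<in> {c / (real m + 2) .. c - c / (real m + 2)}" if "m \<ge> n" for m
  proof -
    have "c / \<mu> < real m + 2"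
      using n that by (smt (verit) of_nat_le_iff)
    then have "c / (real m + 2) < \<mu>"
      using \<open>\<mu> > 0\<close> by (simp add: divide_less_eq mult.commute)
    then show ?thesis by (auto simp: \<mu>_def)
  qed
  then show ?thesis by blast
qed

lemma borel_measurable_extend_by_inverse:
  fixes \<phi> :: "'a::metric_space \<Rightarrow> 'b::metric_space" and g :: "'a \<Rightarrow> real" and K :: "nat \<Rightarrow> 'a set"
  assumes \<phi>: "continuous_on D \<phi>" "inj_on \<phi> D" and g: "continuous_on D g"
    and K: "\<And>n. compact (K n)" "\<And>n. K n \<subseteq> D"
    and exhaust: "\<And>q. q \<in> D \<Longrightarrow> \<exists>n. \<forall>m\<ge>n. q \<in> K m"
  shows "(\<lambda>y. if y \<in> \<phi> ` D then g (the_inv_into D \<phi> y) else 0) \<in> borel_measurable borel"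
proof (rule borel_measurable_LIMSEQ_real)
  let ?f = "\<lambda>n y. indicator (\<phi> ` K n) y *\<^sub>R g (the_inv_into D \<phi> y)"
  show "?f n \<in> borel_measurable borel" for n
  proof (rule borel_measurable_continuous_on_indicator)
    have "compact (\<phi> ` K n)"
      using K \<phi>(1) by (meson compact_continuous_image continuous_on_subset)
    then show "\<phi> ` K n \<in> sets borel"
      by (simp add: compact_imp_closed)
    have "continuous_on (\<phi> ` K n) (the_inv_into D \<phi>)"
      using K \<phi> by (intro continuous_on_inv) (auto intro: continuous_on_subset the_inv_into_f_f)
    then show "continuous_on (\<phi> ` K n) (\<lambda>y. g (the_inv_into D \<phi> y))"
      by (rule continuous_on_compose2[OF g]) (use K(2) \<phi>(2) in \<open>force simp: the_inv_into_f_f\<close>)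
  qed
  show "(\<lambda>n. ?f n y) \<longlonglongrightarrow> (if y \<in> \<phi> ` D then g (the_inv_into D \<phi> y) else 0)" for y
  proof (cases "y \<in> \<phi> ` D")
    case True
    then obtain q where "q \<in> D" "y = \<phi> q" by blast
    then obtain n where "\<forall>m\<ge>n. y \<in> \<phi> ` K m" using exhaust by blast
    then have "eventually (\<lambda>m. ?f m y = g (the_inv_into D \<phi> y)) sequentially"
      unfolding eventually_sequentially by (auto simp: indicator_def)
    then show ?thesis using True by (simp add: tendsto_eventually)
  next
    case False
    then have "y \<notin> \<phi> ` K n" for n using K(2) by blast
    then show ?thesis using False by simp
  qed
qed

section \<open>Convolution with the kernel\<close>

locale convolution_kernel =
  fixes J :: "'a::euclidean_space \<Rightarrow> real" and d :: real
  assumes kernel_ok: "kernel_ok J d"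
begin

lemma
  shows d_pos: "0 < d" and J_continuous: "continuous_on UNIV J" and J_nonneg: "0 \<le> J x"
    and J_symmetric: "J (- x) = J x" and J_has_integral: "(J has_integral 1) UNIV"
    and J_pos: "norm x < d \<Longrightarrow> 0 < J x" and J_vanishes: "d \<le> norm x \<Longrightarrow> J x = 0"
  using kernel_ok unfolding kernel_ok_def by auto

lemma J_borel: "J \<in> borel_measurable borel"
  by (rule borel_measurable_continuous_onI[OF J_continuous])

definition kconv :: "('a \<Rightarrow> real) \<Rightarrow> 'a \<Rightarrow> real" where
  "kconv v x = integral UNIV (\<lambda>y. J (x - y) * v y)"

lemma translated_kernel_measurable: "(\<lambda>y. J (x - y)) \<in> borel_measurable lebesgue"
proof -
  have "(\<lambda>y. J (x - y)) \<in> borel_measurable lborel"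
    using J_borel by measurable
  then show ?thesis
    by (rule measurable_completion)
qed

lemma translated_kernel_has_integral: "((\<lambda>y. J (x - y)) has_integral 1) UNIV"
proof -
  have "J absolutely_integrable_on UNIV"
    using J_has_integral J_nonneg by (intro nonnegative_absolutely_integrable_1) auto
  then have "((\<lambda>y. J (- x + y)) has_integral integral UNIV J) UNIV"
    by (intro has_integral_translate_UNIV J_borel)
  moreover have "J (- x + y) = J (x - y)" for y
    using J_symmetric[of "x - y"] by simp
  ultimately show ?thesis
    using J_has_integral by (simp add: integral_unique)
qed

lemma translated_kernel_integrable: "(\<lambda>y. J (x - y)) integrable_on UNIV"
  and translated_kernel_integral: "integral UNIV (\<lambda>y. J (x - y)) = 1"
  using translated_kernel_has_integral by (auto simp: integral_unique)

lemma kconv_integrable: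
  assumes "v \<in> borel_measurable lebesgue" and "\<And>y. \<bar>v y\<bar> \<le> M"
  shows "(\<lambda>y. J (x - y) * v y) integrable_on UNIV"
proof (rule measurable_bounded_by_integrable_imp_integrable_real)
  show "(\<lambda>y. J (x - y) * v y) \<in> borel_measurable (lebesgue_on UNIV)"
    using translated_kernel_measurable assms(1) by (simp add: lebesgue_on_UNIV_eq)
  show "(\<lambda>y. J (x - y) * M) integrable_on UNIV"
    by (rule integrable_on_mult_left[OF translated_kernel_integrable])
  show "\<bar>J (x - y) * v y\<bar> \<le> J (x - y) * M" for y
    using assms(2)[of y] J_nonneg[of "x - y"] by (simp add: abs_mult mult_left_mono)
qed simp

lemma kconv_const [simp]: "kconv (\<lambda>_. c) x = c"
  using translated_kernel_has_integral[of x] by (simp add: kconv_def integral_unique)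

lemma kconv_cmult: "kconv (\<lambda>y. c * v y) x = c * kconv v x"
  by (simp add: kconv_def mult.left_commute)

lemma kconv_mono:
  assumes "v \<in> borel_measurable lebesgue" "w \<in> borel_measurable lebesgue"
    and "\<And>y. \<bar>v y\<bar> \<le> M" "\<And>y. \<bar>w y\<bar> \<le> M"
    and "\<And>y. J (x - y) \<noteq> 0 \<Longrightarrow> v y \<le> w y"
  shows "kconv v x \<le> kconv w x"
  unfolding kconv_def
proof (rule integral_le)
  show "J (x - y) * v y \<le> J (x - y) * w y" for y
    using assms(5)[of y] J_nonneg[of "x - y"] by (cases "J (x - y) = 0") (auto intro: mult_left_mono)
qed (use kconv_integrable assms in auto)

lemma kconv_bounds:
  assumes "v \<in> borel_measurable lebesgue" and "\<And>y. 0 \<le> v y \<and> v y \<le> 1"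
  shows "0 \<le> kconv v x" and "kconv v x \<le> 1"
  using kconv_mono[of "\<lambda>_. 0" v 1 x] kconv_mono[of v "\<lambda>_. 1" 1 x] assms by auto

lemma kconv_diff_le:
  assumes "v \<in> borel_measurable lebesgue" "w \<in> borel_measurable lebesgue"
    and "\<And>y. \<bar>v y\<bar> \<le> M" "\<And>y. \<bar>w y\<bar> \<le> M" and "\<And>y. \<bar>v y - w y\<bar> \<le> e"
  shows "\<bar>kconv v x - kconv w x\<bar> \<le> e"
proof -
  have "kconv v x - kconv w x = integral UNIV (\<lambda>y. J (x - y) * (v y - w y))"
    using kconv_integrable[OF assms(1,3)] kconv_integrable[OF assms(2,4)]
    by (simp add: kconv_def right_diff_distrib integral_diff)
  also have "\<bar>\<dots>\<bar> \<le> integral UNIV (\<lambda>y. J (x - y) * e)"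
    unfolding real_norm_def[symmetric]
  proof (rule integral_norm_bound_integral)
    show "(\<lambda>y. J (x - y) * (v y - w y)) integrable_on UNIV"
      using kconv_integrable[OF assms(1,3)] kconv_integrable[OF assms(2,4)]
      by (simp add: right_diff_distrib integrable_diff)
    show "(\<lambda>y. J (x - y) * e) integrable_on UNIV"
      using kconv_integrable[of "\<lambda>_. e" "\<bar>e\<bar>"] by simp
    show "norm (J (x - y) * (v y - w y)) \<le> J (x - y) * e" for y
      using assms(5)[of y] J_nonneg[of "x - y"] by (simp add: abs_mult mult_left_mono)
  qed
  also have "\<dots> = e"
    by (simp add: translated_kernel_integral)
  finally show ?thesis .
qed

lemma kconv_tendsto:
  assumes "\<And>k. v k \<in> borel_measurable lebesgue" and "\<And>k y. \<bar>v k y\<bar> \<le> M"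
    and "\<And>y. (\<lambda>k. v k y) \<longlonglongrightarrow> w y"
  shows "(\<lambda>k. kconv (v k) x) \<longlonglongrightarrow> kconv w x"
  unfolding kconv_def
proof (rule dominated_convergence)
  show "(\<lambda>y. J (x - y) * v k y) integrable_on UNIV" for k
    using kconv_integrable assms by blast
  show "(\<lambda>y. J (x - y) * M) integrable_on UNIV"
    by (rule integrable_on_mult_left[OF translated_kernel_integrable])
  show "norm (J (x - y) * v k y) \<le> J (x - y) * M" for k y
    using assms(2)[of k y] J_nonneg[of "x - y"] by (simp add: abs_mult mult_left_mono)
  show "(\<lambda>k. J (x - y) * v k y) \<longlonglongrightarrow> J (x - y) * w y" for y
    by (intro tendsto_mult_left assms(3))
qed

lemma kconv_split:
  assumes "S \<in> sets lebesgue" and "v \<in> borel_measurable lebesgue" and "\<And>y. \<bar>v y\<bar> \<le> M"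
  shows "(\<lambda>y. J (x - y) * v y) integrable_on S"
    and "kconv v x = integral S (\<lambda>y. J (x - y) * v y) + integral (- S) (\<lambda>y. J (x - y) * v y)"
proof -
  have restricted: "(\<lambda>y. J (x - y) * (indicator T y * v y)) integrable_on UNIV" if "T \<in> sets lebesgue" for T
    using that assms(2,3) order_trans[OF abs_ge_zero assms(3)]
    by (intro kconv_integrable[where M = M]) (auto simp: indicator_def)
  have eq: "(\<lambda>y. J (x - y) * (indicator T y * v y)) = (\<lambda>y. if y \<in> T then J (x - y) * v y else 0)" for T
    by (auto simp: indicator_def)
  show "(\<lambda>y. J (x - y) * v y) integrable_on S"
    using restricted[OF assms(1)] unfolding eq integrable_restrict_UNIV .
  have "kconv v x = integral UNIV (\<lambda>y. J (x - y) * (indicator S y * v y) + J (x - y) * (indicator (- S) y * v y))"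
    unfolding kconv_def by (rule arg_cong[where f = "integral UNIV"]) (auto simp: indicator_def)
  also have "\<dots> = integral UNIV (\<lambda>y. J (x - y) * (indicator S y * v y))
      + integral UNIV (\<lambda>y. J (x - y) * (indicator (- S) y * v y))"
    using assms(1) by (intro integral_add restricted) (auto simp: Compl_in_sets_lebesgue)
  finally show "kconv v x = integral S (\<lambda>y. J (x - y) * v y) + integral (- S) (\<lambda>y. J (x - y) * v y)"
    unfolding eq integral_restrict_UNIV .
qed

lemma translated_kernel_support_box:
  assumes "bounded K"
  obtains b where "\<And>x y. x \<in> K \<Longrightarrow> y \<notin> cbox (- b) b \<Longrightarrow> J (x - y) = 0"
proof -
  obtain R where R: "\<And>x. x \<in> K \<Longrightarrow> norm x \<le> R"
    using assms bounded_iff by metis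
  obtain b where b: "cball (0::'a) (R + d) \<subseteq> cbox (- b) b"
    using bounded_subset_cbox_symmetric[OF bounded_cball] by blast
  have "J (x - y) = 0" if "x \<in> K" "y \<notin> cbox (- b) b" for x y
  proof -
    have "R + d < norm y" using b that(2) by (meson mem_cball_0 not_le subsetD)
    then show ?thesis
      using R[OF that(1)] norm_triangle_ineq2[of y x] by (intro J_vanishes) (simp add: norm_minus_commute)
  qed
  then show ?thesis using that by blast
qed

lemma kconv_equicontinuous:
  assumes "bounded K" and "e > 0"
  obtains \<delta> where "\<delta> > 0" and "\<And>x x' v. x \<in> K \<Longrightarrow> x' \<in> K \<Longrightarrow> dist x x' < \<delta> \<Longrightarrow>
      v \<in> borel_measurable lebesgue \<Longrightarrow> (\<And>y. \<bar>v y\<bar> \<le> 1) \<Longrightarrow> \<bar>kconv v x - kconv v x'\<bar> \<le> e"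
proof -
  obtain b where outside: "\<And>x y. x \<in> K \<Longrightarrow> y \<notin> cbox (- b) b \<Longrightarrow> J (x - y) = 0"
    using translated_kernel_support_box[OF assms(1)] by blast
  define c where "c = measure lborel (cbox (- b) b) + 1"
  have "c > 0" by (simp add: c_def add_nonneg_pos)
  obtain \<delta> where "\<delta> > 0" and \<delta>: "\<And>a a'. dist a' a < \<delta> \<Longrightarrow> dist (J a') (J a) < e / c"
    using uniformly_continuous_on_UNIV_if_vanishing[OF J_continuous J_vanishes] \<open>e > 0\<close> \<open>c > 0\<close>
    unfolding uniformly_continuous_on_def by (metis divide_pos_pos UNIV_I)
  have "\<bar>kconv v x - kconv v x'\<bar> \<le> e"
    if x: "x \<in> K" "x' \<in> K" "dist x x' < \<delta>" and v: "v \<in> borel_measurable lebesgue" "\<And>y. \<bar>v y\<bar> \<le> 1"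
    for x x' v
  proof -
    have "kconv v x - kconv v x' = integral UNIV (\<lambda>y. (J (x - y) - J (x' - y)) * v y)"
      using kconv_integrable[OF v] by (simp add: kconv_def left_diff_distrib integral_diff)
    also have "\<bar>\<dots>\<bar> \<le> integral UNIV (\<lambda>y. if y \<in> cbox (- b) b then e / c else 0)"
      unfolding real_norm_def[symmetric]
    proof (rule integral_norm_bound_integral)
      show "(\<lambda>y. (J (x - y) - J (x' - y)) * v y) integrable_on UNIV"
        using kconv_integrable[OF v] by (simp add: left_diff_distrib integrable_diff)
      show "(\<lambda>y. if y \<in> cbox (- b) b then e / c else 0) integrable_on UNIV"
        by (simp add: integrable_restrict_UNIV integrable_const)
      show "norm ((J (x - y) - J (x' - y)) * v y) \<le> (if y \<in> cbox (- b) b then e / c else 0)" for y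
      proof (cases "y \<in> cbox (- b) b")
        case True
        have "dist (x - y) (x' - y) < \<delta>" using x(3) by (simp add: dist_norm)
        then have "\<bar>J (x - y) - J (x' - y)\<bar> \<le> e / c" using \<delta> by (force simp: dist_real_def)
        then show ?thesis
          using True mult_mono[OF _ v(2)[of y]] by (simp add: abs_mult)
      qed (simp add: outside x)
    qed
    also have "\<dots> = measure lborel (cbox (- b) b) * (e / c)"
      by (simp add: integral_restrict_UNIV)
    also have "\<dots> \<le> e"
      using \<open>e > 0\<close> \<open>c > 0\<close> by (simp add: c_def field_simps)
    finally show ?thesis .
  qed
  then show ?thesis
    using \<open>\<delta> > 0\<close> that by blast
qed

lemma kconv_continuous_on:
  assumes "bounded K" and "v \<in> borel_measurable lebesgue" and "\<And>y. \<bar>v y\<bar> \<le> 1"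
  shows "continuous_on K (kconv v)"
  unfolding continuous_on_iff
proof (intro ballI allI impI)
  fix x and e :: real assume "x \<in> K" "e > 0"
  obtain \<delta> where "\<delta> > 0" and \<delta>: "\<And>x x'. x \<in> K \<Longrightarrow> x' \<in> K \<Longrightarrow> dist x x' < \<delta> \<Longrightarrow>
      \<bar>kconv v x - kconv v x'\<bar> \<le> e / 2"
    using kconv_equicontinuous[OF assms(1), of "e / 2"] assms(2,3) \<open>e > 0\<close> by (metis half_gt_zero)
  show "\<exists>\<delta>>0. \<forall>x'\<in>K. dist x' x < \<delta> \<longrightarrow> dist (kconv v x') (kconv v x) < e"
    using \<delta> \<open>x \<in> K\<close> \<open>\<delta> > 0\<close> \<open>e > 0\<close> by (intro exI[of _ \<delta>]) (force simp: dist_real_def)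
qed

end

section \<open>The exterior collar and the extension of boundary values\<close>

locale nonlocal_flux_problem = convolution_kernel J d
  for J :: "'a::euclidean_space \<Rightarrow> real" and d :: real +
  fixes \<Omega> :: "'a set" and \<eta> :: "'a \<Rightarrow> 'a" and s0 p :: real
  assumes domain_ok: "domain_ok \<Omega> \<eta> s0 d" and p_pos: "0 < p" and p_less_1: "p < 1"
begin

abbreviation ext :: "('a \<Rightarrow> real \<Rightarrow> real) \<Rightarrow> 'a \<Rightarrow> real \<Rightarrow> real" where
  "ext \<equiv> ext_u \<Omega> \<eta> s0"

definition collar :: "'a set" where
  "collar = {y. y \<notin> closure \<Omega> \<and> infdist y \<Omega> < s0}"

definition normal_coords :: "'a \<times> real \<Rightarrow> 'a" where
  "normal_coords = (\<lambda>(z, s). z + s *\<^sub>R \<eta> z)"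

definition foot :: "'a \<Rightarrow> 'a" where
  "foot y = fst (the_inv_into (frontier \<Omega> \<times> {0<..<s0}) normal_coords y)"

lemma
  shows \<Omega>_open: "open \<Omega>" and \<Omega>_bounded: "bounded \<Omega>" and \<Omega>_nonempty: "\<Omega> \<noteq> {}"
    and d_less_s0: "d < s0" and \<eta>_continuous: "continuous_on (frontier \<Omega>) \<eta>"
    and normal_coords_bij: "bij_betw normal_coords (frontier \<Omega> \<times> {0<..<s0}) collar"
    and norm_\<eta>: "z \<in> frontier \<Omega> \<Longrightarrow> norm (\<eta> z) = 1"
  using domain_ok unfolding domain_ok_def collar_def normal_coords_def by simp_all

lemma \<Omega>_lebesgue: "\<Omega> \<in> sets lebesgue"
  using \<Omega>_open by (simp add: borel_open sets_completionI_sets)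

lemma frontier_subset_closure: "frontier \<Omega> \<subseteq> closure \<Omega>"
  by (simp add: frontier_def)

lemma frontier_disjoint: "frontier \<Omega> \<inter> \<Omega> = {}"
  using \<Omega>_open by (auto simp: frontier_def interior_open)

lemma frontier_nonempty: "frontier \<Omega> \<noteq> {}"
  using \<Omega>_bounded \<Omega>_nonempty frontier_not_empty not_bounded_UNIV by blast

lemma compact_frontier: "compact (frontier \<Omega>)"
  using \<Omega>_bounded by (simp add: compact_frontier_bounded)

lemma bounded_closure_\<Omega>: "bounded (closure \<Omega>)"
  using \<Omega>_bounded by (rule bounded_closure)

lemma collar_eq_image: "collar = normal_coords ` (frontier \<Omega> \<times> {0<..<s0})"
  using normal_coords_bij by (simp add: bij_betw_def)

lemma normal_coords_in_collar:
  "z \<in> frontier \<Omega> \<Longrightarrow> 0 < s \<Longrightarrow> s < s0 \<Longrightarrow> z + s *\<^sub>R \<eta> z \<in> collar"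
  by (force simp: collar_eq_image normal_coords_def)

lemma collar_disjoint: "y \<in> collar \<Longrightarrow> y \<notin> closure \<Omega>"
  by (simp add: collar_def)

lemma collar_open: "open collar"
proof -
  have "open {y. infdist y \<Omega> < s0}"
    by (rule open_Collect_less) (auto intro: continuous_on_infdist continuous_on_id)
  moreover have "collar = - closure \<Omega> \<inter> {y. infdist y \<Omega> < s0}"
    by (auto simp: collar_def)
  ultimately show ?thesis by auto
qed

lemma foot_normal_coords:
  assumes "z \<in> frontier \<Omega>" and "0 < s" and "s < s0"
  shows "foot (z + s *\<^sub>R \<eta> z) = z"
  using the_inv_into_f_f[OF bij_betw_imp_inj_on[OF normal_coords_bij], of "(z, s)"] assms
  by (simp add: foot_def normal_coords_def)

lemma foot_in_frontier: "y \<in> collar \<Longrightarrow> foot y \<in> frontier \<Omega>"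
  by (auto simp: collar_eq_image normal_coords_def foot_normal_coords)

lemma ext_u_eq:
  "ext u y t = (if y \<in> frontier \<Omega> then u y t else if y \<in> collar then u (foot y) t else 0)"
proof -
  have "(\<exists>z s. z \<in> frontier \<Omega> \<and> 0 < s \<and> s < s0 \<and> y = z + s *\<^sub>R \<eta> z) \<longleftrightarrow> y \<in> collar"
    by (force simp: collar_eq_image normal_coords_def)
  moreover have "(THE z. \<exists>s. z \<in> frontier \<Omega> \<and> 0 < s \<and> s < s0 \<and> y = z + s *\<^sub>R \<eta> z) = foot y"
    if "y \<in> collar"
  proof (rule the_equality)
    show "\<exists>s. foot y \<in> frontier \<Omega> \<and> 0 < s \<and> s < s0 \<and> y = foot y + s *\<^sub>R \<eta> (foot y)"
      using that by (auto simp: collar_eq_image normal_coords_def foot_normal_coords)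
  qed (auto simp: foot_normal_coords)
  ultimately show ?thesis
    unfolding ext_u_def by simp
qed

lemma ext_u_cases:
  obtains z where "z \<in> frontier \<Omega>" "\<And>u t. ext u y t = u z t" | "\<And>u t. ext u y t = 0"
  using foot_in_frontier[of y] by (cases "y \<in> frontier \<Omega>"; cases "y \<in> collar") (auto simp: ext_u_eq)

lemma ext_u_near:
  assumes "x \<in> closure \<Omega>" and "y \<notin> \<Omega>" and "J (x - y) \<noteq> 0"
  obtains z where "z \<in> frontier \<Omega>" and "\<And>u t. ext u y t = u z t"
proof (cases "y \<in> frontier \<Omega>")
  case True
  then show ?thesis using that[of y] by (simp add: ext_u_eq)
next
  case False
  have "dist y x < d"
    using assms(3) J_vanishes by (force simp: dist_norm norm_minus_commute)
  then obtain x' where "x' \<in> \<Omega>" "dist x' x < d - dist y x"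
    using assms(1) by (meson closure_approachable diff_gt_0_iff_gt)
  then have "infdist y \<Omega> < s0"
    using infdist_le[of x' \<Omega> y] dist_triangle2[of y x' x] d_less_s0 by linarith
  moreover have "y \<notin> closure \<Omega>"
    using False assms(2) by (simp add: closure_Un_frontier)
  ultimately have "y \<in> collar"
    by (simp add: collar_def)
  then show ?thesis
    using that[of "foot y"] False foot_in_frontier by (simp add: ext_u_eq)
qed

lemma ext_u_measurable:
  assumes "continuous_on (frontier \<Omega>) (\<lambda>z. u z t)"
  shows "(\<lambda>y. ext u y t) \<in> borel_measurable borel"
proof -
  let ?D = "frontier \<Omega> \<times> {0<..<s0}"
  have "s0 > 0" using d_pos d_less_s0 by linarith
  have "(\<lambda>y. if y \<in> normal_coords ` ?D then u (fst (the_inv_into ?D normal_coords y)) t else 0)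
      \<in> borel_measurable borel"
  proof (rule borel_measurable_extend_by_inverse)
    show "continuous_on ?D normal_coords"
      unfolding normal_coords_def case_prod_beta
      by (intro continuous_intros continuous_on_compose2[OF \<eta>_continuous]) auto
    show "inj_on normal_coords ?D"
      using normal_coords_bij by (rule bij_betw_imp_inj_on)
    show "continuous_on ?D (\<lambda>q. u (fst q) t)"
      by (rule continuous_on_compose2[OF assms continuous_on_fst]) auto
    let ?K = "\<lambda>n::nat. frontier \<Omega> \<times> {s0 / (n + 2) .. s0 - s0 / (n + 2)}"
    show "compact (?K n)" for n
      by (simp add: compact_Times compact_frontier)
    show "?K n \<subseteq> ?D" for n
    proof -
      have "0 < s0 / (real n + 2)" using \<open>s0 > 0\<close> by simp
      then show ?thesis by auto
    qed
    show "\<exists>n. \<forall>m\<ge>n. q \<in> ?K m" if "q \<in> ?D" for q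
      using that eventually_in_inner_intervals[of "snd q" s0] by (cases q) auto
  qed
  then have "(\<lambda>y. if y \<in> collar then u (foot y) t else 0) \<in> borel_measurable borel"
    unfolding collar_eq_image foot_def .
  moreover have "(\<lambda>y. if y \<in> frontier \<Omega> then u y t else 0) \<in> borel_measurable borel"
    using assms compact_frontier
    by (intro borel_measurable_continuous_on_if) (auto simp: compact_imp_closed)
  moreover have "ext u y t = (if y \<in> frontier \<Omega> then u y t else 0) + (if y \<in> collar then u (foot y) t else 0)"
    for y
    using collar_disjoint[of y] frontier_subset_closure by (auto simp: ext_u_eq)
  ultimately show ?thesis
    by simp
qed

section \<open>The variation-of-constants map\<close>

definition profile :: "('a \<Rightarrow> real \<Rightarrow> real) \<Rightarrow> real \<Rightarrow> 'a \<Rightarrow> real" where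
  "profile u t y = (if y \<in> \<Omega> then u y t else ext u y t powr p)"

definition gain :: "('a \<Rightarrow> real \<Rightarrow> real) \<Rightarrow> 'a \<Rightarrow> real \<Rightarrow> real" where
  "gain u x t = kconv (profile u t) x"

definition interior_mass :: "'a \<Rightarrow> real" where
  "interior_mass x = kconv (indicator \<Omega>) x"

definition exterior_mass :: "'a \<Rightarrow> real" where
  "exterior_mass x = kconv (indicator (- \<Omega>)) x"

text \<open>Short enough that \<open>duhamel u x t \<le> t \<le> 1\<close> keeps the iterates in \<open>[0, 1]\<close>
  and that \<open>exp (- interior_mass x * t) \<ge> 1 / 2\<close>.\<close>

definition horizon :: real where
  "horizon = 1 / 2"

text \<open>Problem (P) reads \<open>u\<^sub>t + interior_mass x * u = gain u x t\<close> (see \<open>gain_minus_loss\<close>);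
  its solutions are the fixed points of the variation-of-constants formula.\<close>

definition duhamel :: "('a \<Rightarrow> real \<Rightarrow> real) \<Rightarrow> 'a \<Rightarrow> real \<Rightarrow> real" where
  "duhamel u x t = exp (- (interior_mass x * t)) *
     integral {0..t} (\<lambda>s. exp (interior_mass x * s) * gain u x s)"

text \<open>The seed of the iteration is discontinuous and its limit is not a priori continuous, so
  the iteration runs in this class; measurability, unlike continuity, passes to pointwise limits.\<close>

definition admissible :: "('a \<Rightarrow> real \<Rightarrow> real) \<Rightarrow> bool" where
  "admissible u \<longleftrightarrow> (\<forall>y\<in>closure \<Omega>. \<forall>t\<in>{0..horizon}. 0 \<le> u y t \<and> u y t \<le> 1)
     \<and> (\<forall>t\<in>{0..horizon}. profile u t \<in> borel_measurable lebesgue)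
     \<and> (\<forall>x\<in>closure \<Omega>. gain u x \<in> borel_measurable (lebesgue_on {0..horizon}))"

lemma admissibleD:
  assumes "admissible u"
  shows "\<And>y t. y \<in> closure \<Omega> \<Longrightarrow> t \<in> {0..horizon} \<Longrightarrow> 0 \<le> u y t \<and> u y t \<le> 1"
    and "\<And>t. t \<in> {0..horizon} \<Longrightarrow> profile u t \<in> borel_measurable lebesgue"
    and "\<And>x. x \<in> closure \<Omega> \<Longrightarrow> gain u x \<in> borel_measurable (lebesgue_on {0..horizon})"
  using assms unfolding admissible_def by auto

lemma mass_bounds:
  shows "0 \<le> interior_mass x" "interior_mass x \<le> 1" "0 \<le> exterior_mass x" "exterior_mass x \<le> 1"
  using \<Omega>_lebesgue unfolding interior_mass_def exterior_mass_def
  by (auto intro!: kconv_bounds borel_measurable_indicator simp: Compl_in_sets_lebesgue)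

lemma profile_bounds:
  assumes "\<And>y. y \<in> closure \<Omega> \<Longrightarrow> 0 \<le> u y t \<and> u y t \<le> 1"
  shows "0 \<le> profile u t y \<and> profile u t y \<le> 1"
proof (cases "y \<in> \<Omega>")
  case True
  then show ?thesis using assms closure_subset by (force simp: profile_def)
next
  case False
  have "0 \<le> ext u y t \<and> ext u y t \<le> 1"
  proof (cases rule: ext_u_cases[of y])
    case (1 z)
    then show ?thesis using assms frontier_subset_closure by auto
  qed simp
  then show ?thesis using False p_pos by (simp add: profile_def powr_le1)
qed

lemma profile_mono:
  assumes "\<And>y. y \<in> closure \<Omega> \<Longrightarrow> 0 \<le> u y t" and "\<And>y. y \<in> closure \<Omega> \<Longrightarrow> u y t \<le> v y t"
  shows "profile u t y \<le> profile v t y"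
proof (cases "y \<in> \<Omega>")
  case True
  then show ?thesis using assms closure_subset by (force simp: profile_def)
next
  case False
  have "0 \<le> ext u y t \<and> ext u y t \<le> ext v y t"
  proof (cases rule: ext_u_cases[of y])
    case (1 z)
    then show ?thesis using assms frontier_subset_closure by auto
  qed simp
  then show ?thesis using False p_pos by (simp add: profile_def powr_mono2)
qed

lemma gain_bounds:
  assumes "admissible u" and "t \<in> {0..horizon}"
  shows "0 \<le> gain u x t \<and> gain u x t \<le> 1"
  using admissibleD[OF assms(1)] assms(2) profile_bounds unfolding gain_def
  by (simp add: kconv_bounds)

lemma gain_mono:
  assumes "admissible u" "admissible v" and "t \<in> {0..horizon}"
    and "\<And>y. y \<in> closure \<Omega> \<Longrightarrow> u y t \<le> v y t"
  shows "gain u x t \<le> gain v x t"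
  unfolding gain_def
proof (rule kconv_mono)
  show "\<bar>profile u t y\<bar> \<le> 1" "\<bar>profile v t y\<bar> \<le> 1" for y
    using profile_bounds[of u t y] profile_bounds[of v t y] admissibleD(1) assms by auto
  show "profile u t y \<le> profile v t y" for y
    using admissibleD(1)[OF assms(1)] assms(3,4) by (intro profile_mono) auto
qed (use admissibleD(2) assms in auto)

lemma interior_mass_eq: "interior_mass x = integral \<Omega> (\<lambda>y. J (x - y))"
proof -
  have "interior_mass x = integral \<Omega> (\<lambda>y. J (x - y) * indicator \<Omega> y) + integral (- \<Omega>) (\<lambda>y. J (x - y) * indicator \<Omega> y)"
    unfolding interior_mass_def using \<Omega>_lebesgue
    by (intro kconv_split[where M = 1]) (auto simp: indicator_def)
  moreover have "integral \<Omega> (\<lambda>y. J (x - y) * indicator \<Omega> y) = integral \<Omega> (\<lambda>y. J (x - y))"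
    by (rule integral_cong) simp
  moreover have "integral (- \<Omega>) (\<lambda>y. J (x - y) * indicator \<Omega> y) = integral (- \<Omega>) (\<lambda>_. 0)"
    by (rule integral_cong) simp
  ultimately show ?thesis
    by simp
qed

lemma gain_minus_loss:
  assumes "admissible u" and "x \<in> closure \<Omega>" and "t \<in> {0..horizon}"
  shows "gain u x t - interior_mass x * u x t
    = integral \<Omega> (\<lambda>y. J (x - y) * (u y t - u x t)) + integral (- \<Omega>) (\<lambda>y. J (x - y) * ext u y t powr p)"
proof -
  have v: "profile u t \<in> borel_measurable lebesgue" "\<And>y. \<bar>profile u t y\<bar> \<le> 1"
    using admissibleD[OF assms(1)] assms(3) profile_bounds[of u t] by auto
  have on_\<Omega>: "\<And>y. y \<in> \<Omega> \<Longrightarrow> J (x - y) * profile u t y = J (x - y) * u y t"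
    and off_\<Omega>: "\<And>y. y \<in> - \<Omega> \<Longrightarrow> J (x - y) * profile u t y = J (x - y) * ext u y t powr p"
    by (auto simp: profile_def)
  have int_u: "(\<lambda>y. J (x - y) * u y t) integrable_on \<Omega>"
    using kconv_split(1)[OF \<Omega>_lebesgue v] on_\<Omega> by (rule integrable_eq)
  have int_J: "(\<lambda>y. J (x - y) * u x t) integrable_on \<Omega>"
    using kconv_split(1)[OF \<Omega>_lebesgue, of "indicator \<Omega>" 1 x] \<Omega>_lebesgue
    by (intro integrable_on_mult_left) (auto simp: indicator_def elim: integrable_eq)
  have "integral \<Omega> (\<lambda>y. J (x - y) * profile u t y) = integral \<Omega> (\<lambda>y. J (x - y) * u y t)"
    and "integral (- \<Omega>) (\<lambda>y. J (x - y) * profile u t y) = integral (- \<Omega>) (\<lambda>y. J (x - y) * ext u y t powr p)"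
    using on_\<Omega> off_\<Omega> by (auto intro: integral_cong)
  then have "gain u x t = integral \<Omega> (\<lambda>y. J (x - y) * u y t) + integral (- \<Omega>) (\<lambda>y. J (x - y) * ext u y t powr p)"
    unfolding gain_def kconv_split(2)[OF \<Omega>_lebesgue v] by simp
  moreover have "interior_mass x * u x t = integral \<Omega> (\<lambda>y. J (x - y) * u x t)"
    by (simp add: interior_mass_eq)
  moreover have "integral \<Omega> (\<lambda>y. J (x - y) * (u y t - u x t))
      = integral \<Omega> (\<lambda>y. J (x - y) * u y t) - integral \<Omega> (\<lambda>y. J (x - y) * u x t)"
    using int_u int_J by (simp add: right_diff_distrib integral_diff)
  ultimately show ?thesis
    by simp
qed

lemma exp_interior_mass_bounds:
  assumes "s \<in> {0..horizon}"
  shows "1 \<le> exp (interior_mass x * s) \<and> exp (interior_mass x * s) \<le> exp 1"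
proof -
  have "0 \<le> interior_mass x * s \<and> interior_mass x * s \<le> 1 * 1"
    using mass_bounds[of x] assms by (intro conjI mult_mono) (auto simp: horizon_def)
  then show ?thesis by simp
qed

lemma duhamel_integrand_bounds:
  assumes "admissible u" and "s \<in> {0..horizon}"
  shows "0 \<le> exp (interior_mass x * s) * gain u x s \<and> exp (interior_mass x * s) * gain u x s \<le> exp 1"
proof -
  have "exp (interior_mass x * s) * gain u x s \<le> exp 1 * 1"
    using exp_interior_mass_bounds[OF assms(2), of x] gain_bounds[OF assms, of x] by (intro mult_mono) auto
  then show ?thesis using gain_bounds[OF assms, of x] by simp
qed

lemma duhamel_integrand_integrable:
  assumes "admissible u" and "x \<in> closure \<Omega>" and "0 \<le> a" and "b \<le> horizon"
  shows "(\<lambda>s. exp (interior_mass x * s) * gain u x s) integrable_on {a..b}"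
proof (rule integrable_on_subinterval)
  show "(\<lambda>s. exp (interior_mass x * s) * gain u x s) integrable_on {0..horizon}"
  proof (rule measurable_bounded_by_integrable_imp_integrable_real)
    have "(\<lambda>s. exp (interior_mass x * s)) \<in> borel_measurable (lebesgue_on {0..horizon})"
      by (intro continuous_imp_measurable_on_sets_lebesgue continuous_intros) auto
    then show "(\<lambda>s. exp (interior_mass x * s) * gain u x s) \<in> borel_measurable (lebesgue_on {0..horizon})"
      using admissibleD(3)[OF assms(1,2)] by measurable
    show "\<bar>exp (interior_mass x * s) * gain u x s\<bar> \<le> exp 1" if "s \<in> {0..horizon}" for s
      using duhamel_integrand_bounds[OF assms(1) that, of x] by simp
  qed auto
qed (use assms in auto)

lemma duhamel_has_integral:
  assumes "admissible u" and "x \<in> closure \<Omega>" and "t \<in> {0..horizon}"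
  shows "((\<lambda>s. exp (- (interior_mass x * (t - s))) * gain u x s) has_integral duhamel u x t) {0..t}"
proof -
  have "((\<lambda>s. exp (- (interior_mass x * t)) * (exp (interior_mass x * s) * gain u x s))
      has_integral duhamel u x t) {0..t}"
    unfolding duhamel_def using duhamel_integrand_integrable[OF assms(1,2), of 0 t] assms(3)
    by (intro has_integral_mult_right integrable_integral) auto
  then show ?thesis
    by (simp add: mult.assoc[symmetric] right_diff_distrib flip: exp_add)
qed

lemma duhamel_bounds:
  assumes "admissible u" and "x \<in> closure \<Omega>" and "t \<in> {0..horizon}"
  shows "0 \<le> duhamel u x t \<and> duhamel u x t \<le> t"
proof -
  have "0 \<le> exp (- (interior_mass x * (t - s))) * gain u x s \<and> exp (- (interior_mass x * (t - s))) * gain u x s \<le> 1"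
    if "s \<in> {0..t}" for s
  proof -
    have "0 \<le> interior_mass x * (t - s)" using mass_bounds that by simp
    then have "exp (- (interior_mass x * (t - s))) \<le> 1" by simp
    then show ?thesis
      using gain_bounds[OF assms(1), of s x] that assms(3) by (auto intro: mult_le_one)
  qed
  then show ?thesis
    using has_integral_nonneg[OF duhamel_has_integral[OF assms]]
      has_integral_le[OF duhamel_has_integral[OF assms] has_integral_const_real[of 1 0 t]] assms(3)
    by auto
qed

lemma duhamel_mono:
  assumes "admissible u" "admissible v" and "x \<in> closure \<Omega>" and "t \<in> {0..horizon}"
    and "\<And>y s. y \<in> closure \<Omega> \<Longrightarrow> s \<in> {0..horizon} \<Longrightarrow> u y s \<le> v y s"
  shows "duhamel u x t \<le> duhamel v x t"
proof -
  have int: "(\<lambda>s. exp (interior_mass x * s) * gain w x s) integrable_on {0..t}"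
    if "admissible w" for w
    using duhamel_integrand_integrable[OF that assms(3)] assms(4) by auto
  have "integral {0..t} (\<lambda>s. exp (interior_mass x * s) * gain u x s)
      \<le> integral {0..t} (\<lambda>s. exp (interior_mass x * s) * gain v x s)"
  proof (rule integral_le[OF int[OF assms(1)] int[OF assms(2)]])
    show "exp (interior_mass x * s) * gain u x s \<le> exp (interior_mass x * s) * gain v x s"
      if "s \<in> {0..t}" for s
      using gain_mono[OF assms(1,2), of s] that assms(4,5) by simp
  qed
  then show ?thesis
    unfolding duhamel_def by simp
qed

lemma interior_mass_continuous: "continuous_on (closure \<Omega>) interior_mass"
  unfolding interior_mass_def[abs_def]
  using \<Omega>_lebesgue by (intro kconv_continuous_on bounded_closure_\<Omega>) (auto simp: indicator_def)

lemma gain_equicontinuous: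
  assumes "admissible u" and "e > 0"
  obtains \<delta> where "\<delta> > 0" and "\<And>x x' s. x \<in> closure \<Omega> \<Longrightarrow> x' \<in> closure \<Omega> \<Longrightarrow> dist x x' < \<delta> \<Longrightarrow>
    s \<in> {0..horizon} \<Longrightarrow> \<bar>interior_mass x - interior_mass x'\<bar> \<le> e \<and> \<bar>gain u x s - gain u x' s\<bar> \<le> e"
proof -
  obtain \<delta> where "\<delta> > 0" and \<delta>: "\<And>x x' v. x \<in> closure \<Omega> \<Longrightarrow> x' \<in> closure \<Omega> \<Longrightarrow> dist x x' < \<delta> \<Longrightarrow>
      v \<in> borel_measurable lebesgue \<Longrightarrow> (\<And>y. \<bar>v y\<bar> \<le> 1) \<Longrightarrow> \<bar>kconv v x - kconv v x'\<bar> \<le> e"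
    using kconv_equicontinuous[OF bounded_closure_\<Omega> assms(2)] by metis
  have "\<bar>interior_mass x - interior_mass x'\<bar> \<le> e \<and> \<bar>gain u x s - gain u x' s\<bar> \<le> e"
    if "x \<in> closure \<Omega>" "x' \<in> closure \<Omega>" "dist x x' < \<delta>" "s \<in> {0..horizon}" for x x' s
    using that admissibleD[OF assms(1)] profile_bounds[of u s] \<Omega>_lebesgue
    unfolding interior_mass_def gain_def by (intro conjI \<delta>) (auto simp: indicator_def)
  then show ?thesis
    using that \<open>\<delta> > 0\<close> by blast
qed

lemma duhamel_integrand_equicontinuous:
  assumes "admissible u" and "e > 0"
  obtains \<delta> where "\<delta> > 0" and "\<And>x x' s. x \<in> closure \<Omega> \<Longrightarrow> x' \<in> closure \<Omega> \<Longrightarrow> dist x' x < \<delta> \<Longrightarrow>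
    s \<in> {0..horizon} \<Longrightarrow> \<bar>exp (interior_mass x' * s) * gain u x' s - exp (interior_mass x * s) * gain u x s\<bar> \<le> e"
proof -
  define e' where "e' = e / (2 * exp 1)"
  have "e' > 0" using assms(2) by (simp add: e'_def)
  obtain \<delta> where "\<delta> > 0" and \<delta>: "\<And>x x' s. x \<in> closure \<Omega> \<Longrightarrow> x' \<in> closure \<Omega> \<Longrightarrow> dist x x' < \<delta> \<Longrightarrow>
      s \<in> {0..horizon} \<Longrightarrow> \<bar>interior_mass x - interior_mass x'\<bar> \<le> e' \<and> \<bar>gain u x s - gain u x' s\<bar> \<le> e'"
    using gain_equicontinuous[OF assms(1) \<open>e' > 0\<close>] by metis
  have "\<bar>exp (interior_mass x' * s) * gain u x' s - exp (interior_mass x * s) * gain u x s\<bar> \<le> e"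
    if x: "x \<in> closure \<Omega>" "x' \<in> closure \<Omega>" "dist x' x < \<delta>" and s: "s \<in> {0..horizon}" for x x' s
  proof -
    note close = \<delta>[OF x(2,1) x(3) s]
    have "\<bar>exp (interior_mass x' * s) - exp (interior_mass x * s)\<bar> \<le> exp 1 * \<bar>interior_mass x' * s - interior_mass x * s\<bar>"
      using exp_interior_mass_bounds[OF s] by (intro abs_exp_diff_le) auto
    also have "\<dots> \<le> exp 1 * e'"
    proof -
      have "\<bar>interior_mass x' * s - interior_mass x * s\<bar> = \<bar>interior_mass x - interior_mass x'\<bar> * s"
        using s by (simp add: abs_mult abs_minus_commute flip: left_diff_distrib)
      also have "\<dots> \<le> e' * 1"
        using close s by (intro mult_mono) (auto simp: horizon_def)
      finally show ?thesis by simp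
    qed
    finally have dexp: "\<bar>(exp (interior_mass x' * s) - exp (interior_mass x * s)) * gain u x' s\<bar> \<le> exp 1 * e' * 1"
      unfolding abs_mult using gain_bounds[OF assms(1) s, of x'] by (intro mult_mono) auto
    have dgain: "\<bar>exp (interior_mass x * s) * (gain u x' s - gain u x s)\<bar> \<le> exp 1 * e'"
      unfolding abs_mult using close exp_interior_mass_bounds[OF s, of x] by (intro mult_mono) auto
    have "exp (interior_mass x' * s) * gain u x' s - exp (interior_mass x * s) * gain u x s
        = (exp (interior_mass x' * s) - exp (interior_mass x * s)) * gain u x' s
          + exp (interior_mass x * s) * (gain u x' s - gain u x s)"
      by (simp add: algebra_simps)
    also have "\<bar>\<dots>\<bar> \<le> exp 1 * e' * 1 + exp 1 * e'"
      using dexp dgain abs_triangle_ineq[of "(exp (interior_mass x' * s) - exp (interior_mass x * s)) * gain u x' s"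
          "exp (interior_mass x * s) * (gain u x' s - gain u x s)"] by linarith
    also have "\<dots> = e"
      by (simp add: e'_def)
    finally show ?thesis .
  qed
  then show ?thesis
    using that \<open>\<delta> > 0\<close> by blast
qed

lemma duhamel_continuous:
  assumes "admissible u"
  shows "continuous_on (closure \<Omega> \<times> {0..horizon}) (\<lambda>(x, t). duhamel u x t)"
proof -
  have "continuous_on (closure \<Omega> \<times> {0..horizon})
      (\<lambda>(x, t). integral {0..t} (\<lambda>s. exp (interior_mass x * s) * gain u x s))"
  proof (rule continuous_on_parametric_integral)
    show "(\<lambda>s. exp (interior_mass x * s) * gain u x s) integrable_on {0..horizon}" if "x \<in> closure \<Omega>" for x
      using duhamel_integrand_integrable[OF assms that] by simp
    show "\<bar>exp (interior_mass x * s) * gain u x s\<bar> \<le> exp 1" if "s \<in> {0..horizon}" for x s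
      using duhamel_integrand_bounds[OF assms that, of x] by simp
    show "\<exists>\<delta>>0. \<forall>x'\<in>closure \<Omega>. dist x' x < \<delta> \<longrightarrow>
        (\<forall>s\<in>{0..horizon}. \<bar>exp (interior_mass x' * s) * gain u x' s - exp (interior_mass x * s) * gain u x s\<bar> \<le> e)"
      if "x \<in> closure \<Omega>" and "e > 0" for x e
      using duhamel_integrand_equicontinuous[OF assms \<open>e > 0\<close>] that(1) by metis
  qed
  moreover have "continuous_on (closure \<Omega> \<times> {0..horizon}) (\<lambda>(x, t). exp (- (interior_mass x * t)))"
    unfolding case_prod_beta
    by (intro continuous_intros continuous_on_compose2[OF interior_mass_continuous]) auto
  ultimately show ?thesis
    unfolding duhamel_def case_prod_beta by (intro continuous_on_mult)
qed

definition continuous_state :: "('a \<Rightarrow> real \<Rightarrow> real) \<Rightarrow> bool" where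
  "continuous_state u \<longleftrightarrow> continuous_on (closure \<Omega> \<times> {0..horizon}) (\<lambda>(x, t). u x t)
     \<and> (\<forall>y\<in>closure \<Omega>. \<forall>t\<in>{0..horizon}. 0 \<le> u y t \<and> u y t \<le> 1)"

lemma continuous_state_slice:
  assumes "continuous_state u" and "t \<in> {0..horizon}"
  shows "continuous_on (closure \<Omega>) (\<lambda>y. u y t)"
proof -
  have "continuous_on (closure \<Omega> \<times> {0..horizon}) (\<lambda>q. u (fst q) (snd q))"
    using assms(1) by (simp add: continuous_state_def case_prod_beta)
  then have "continuous_on (closure \<Omega>) (\<lambda>y. (\<lambda>q. u (fst q) (snd q)) (y, t))"
    by (rule continuous_on_compose2) (use assms(2) in \<open>auto intro!: continuous_intros\<close>)
  then show ?thesis by simp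
qed

lemma profile_measurable:
  assumes "continuous_on (closure \<Omega>) (\<lambda>y. u y t)"
  shows "profile u t \<in> borel_measurable lebesgue"
proof -
  have "(\<lambda>y. u y t) \<in> borel_measurable (lebesgue_on \<Omega>)"
    using assms closure_subset \<Omega>_lebesgue
    by (intro continuous_imp_measurable_on_sets_lebesgue) (auto intro: continuous_on_subset)
  then have interior: "(\<lambda>y. if y \<in> \<Omega> then u y t else 0) \<in> borel_measurable lebesgue"
    using \<Omega>_lebesgue by (rule borel_measurable_if_I)
  have "(\<lambda>y. ext u y t) \<in> borel_measurable borel"
    using assms frontier_subset_closure by (intro ext_u_measurable) (rule continuous_on_subset)
  then have "(\<lambda>y. indicator (- \<Omega>) y * ext u y t powr p) \<in> borel_measurable lborel"
    using \<Omega>_open by measurable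
  then have exterior: "(\<lambda>y. indicator (- \<Omega>) y * ext u y t powr p) \<in> borel_measurable lebesgue"
    by (rule measurable_completion)
  have "profile u t = (\<lambda>y. (if y \<in> \<Omega> then u y t else 0) + indicator (- \<Omega>) y * ext u y t powr p)"
    by (auto simp: profile_def fun_eq_iff)
  then show ?thesis
    using interior exterior by simp
qed

lemma profile_uniformly_continuous_in_time:
  assumes "continuous_state u" and "e > 0"
  obtains \<delta> where "\<delta> > 0" and "\<And>s s' y. s \<in> {0..horizon} \<Longrightarrow> s' \<in> {0..horizon} \<Longrightarrow> \<bar>s' - s\<bar> < \<delta> \<Longrightarrow>
    \<bar>profile u s' y - profile u s y\<bar> \<le> e"
proof -
  have compact: "compact (closure \<Omega>)" using \<Omega>_bounded by (simp add: compact_closure)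
  have cont: "continuous_on (closure \<Omega> \<times> {0..horizon}) (\<lambda>q. u (fst q) (snd q))"
    using assms(1) by (simp add: continuous_state_def case_prod_beta)
  have cont_powr: "continuous_on (closure \<Omega> \<times> {0..horizon}) (\<lambda>q. u (fst q) (snd q) powr p)"
    using cont assms(1) p_pos by (intro continuous_on_powr') (auto simp: continuous_state_def)
  obtain \<delta>1 where "\<delta>1 > 0"
    and \<delta>1: "\<And>y s s'. y \<in> closure \<Omega> \<Longrightarrow> s \<in> {0..horizon} \<Longrightarrow> s' \<in> {0..horizon} \<Longrightarrow> \<bar>s' - s\<bar> < \<delta>1 \<Longrightarrow>
        \<bar>u y s' - u y s\<bar> < e"
    using uniform_modulus_in_second_argument[OF compact compact_Icc cont \<open>e > 0\<close>] by auto
  obtain \<delta>2 where "\<delta>2 > 0"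
    and \<delta>2: "\<And>y s s'. y \<in> closure \<Omega> \<Longrightarrow> s \<in> {0..horizon} \<Longrightarrow> s' \<in> {0..horizon} \<Longrightarrow> \<bar>s' - s\<bar> < \<delta>2 \<Longrightarrow>
        \<bar>u y s' powr p - u y s powr p\<bar> < e"
    using uniform_modulus_in_second_argument[OF compact compact_Icc cont_powr \<open>e > 0\<close>] by auto
  have "\<bar>profile u s' y - profile u s y\<bar> \<le> e"
    if s: "s \<in> {0..horizon}" "s' \<in> {0..horizon}" "\<bar>s' - s\<bar> < min \<delta>1 \<delta>2" for s s' y
  proof (cases "y \<in> \<Omega>")
    case True
    then have "\<bar>u y s' - u y s\<bar> < e"
      using s closure_subset by (intro \<delta>1) auto
    then show ?thesis
      using True by (simp add: profile_def)
  next
    case False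
    then show ?thesis
    proof (cases rule: ext_u_cases[of y])
      case (1 z)
      then have "\<bar>u z s' powr p - u z s powr p\<bar> < e"
        using s frontier_subset_closure by (intro \<delta>2) auto
      then show ?thesis
        using False 1(2) by (simp add: profile_def)
    qed (use \<open>e > 0\<close> p_pos in \<open>simp add: profile_def\<close>)
  qed
  then show ?thesis
    using that \<open>\<delta>1 > 0\<close> \<open>\<delta>2 > 0\<close> by (metis min_less_iff_conj)
qed

lemma gain_continuous_in_time:
  assumes "continuous_state u"
  shows "continuous_on {0..horizon} (gain u x)"
  unfolding continuous_on_iff
proof (intro ballI allI impI)
  fix s e :: real assume s: "s \<in> {0..horizon}" and "e > 0"
  obtain \<delta> where "\<delta> > 0" and \<delta>: "\<And>s s' y. s \<in> {0..horizon} \<Longrightarrow> s' \<in> {0..horizon} \<Longrightarrow>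
      \<bar>s' - s\<bar> < \<delta> \<Longrightarrow> \<bar>profile u s' y - profile u s y\<bar> \<le> e / 2"
    using profile_uniformly_continuous_in_time[OF assms, of "e / 2"] \<open>e > 0\<close> by auto
  have bounds: "\<bar>profile u t y\<bar> \<le> 1" if "t \<in> {0..horizon}" for t y
    using profile_bounds[of u t y] assms that by (auto simp: continuous_state_def)
  have "\<bar>gain u x s' - gain u x s\<bar> \<le> e / 2" if "s' \<in> {0..horizon}" "\<bar>s' - s\<bar> < \<delta>" for s'
    unfolding gain_def using that s bounds \<delta>
    by (intro kconv_diff_le profile_measurable continuous_state_slice[OF assms]) auto
  then show "\<exists>\<delta>>0. \<forall>s'\<in>{0..horizon}. dist s' s < \<delta> \<longrightarrow> dist (gain u x s') (gain u x s) < e"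
    using \<open>\<delta> > 0\<close> \<open>e > 0\<close> by (intro exI[of _ \<delta>]) (force simp: dist_real_def)
qed

lemma continuous_state_admissible:
  assumes "continuous_state u"
  shows "admissible u"
  unfolding admissible_def
proof (intro conjI ballI)
  show "0 \<le> u y t" "u y t \<le> 1" if "y \<in> closure \<Omega>" "t \<in> {0..horizon}" for y t
    using assms that by (auto simp: continuous_state_def)
  show "profile u t \<in> borel_measurable lebesgue" if "t \<in> {0..horizon}" for t
    using continuous_state_slice[OF assms that] by (rule profile_measurable)
  show "gain u x \<in> borel_measurable (lebesgue_on {0..horizon})" for x
    using gain_continuous_in_time[OF assms] by (rule continuous_imp_measurable_on_sets_lebesgue) simp
qed

lemma duhamel_continuous_state:
  assumes "admissible u"
  shows "continuous_state (duhamel u)"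
  unfolding continuous_state_def
  using duhamel_continuous[OF assms] duhamel_bounds[OF assms] by (force simp: horizon_def)

lemma duhamel_has_derivative:
  assumes "continuous_state u" and "t \<in> {0..horizon}"
  shows "(duhamel u x has_real_derivative gain u x t - interior_mass x * duhamel u x t)
    (at t within {0..horizon})"
proof -
  have "((\<lambda>t. integral {0..t} (\<lambda>s. exp (interior_mass x * s) * gain u x s))
      has_real_derivative exp (interior_mass x * t) * gain u x t) (at t within {0..horizon})"
    unfolding has_real_derivative_iff_has_vector_derivative
    by (intro integral_has_vector_derivative continuous_intros gain_continuous_in_time assms)
  then have "((\<lambda>t. exp (- (interior_mass x * t)) *
      integral {0..t} (\<lambda>s. exp (interior_mass x * s) * gain u x s)) has_real_derivative
      exp (- (interior_mass x * t)) * (- interior_mass x) * integral {0..t} (\<lambda>s. exp (interior_mass x * s) * gain u x s)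
      + exp (interior_mass x * t) * gain u x t * exp (- (interior_mass x * t))) (at t within {0..horizon})"
    by (intro DERIV_mult) (auto intro!: derivative_eq_intros)
  then show ?thesis
    unfolding duhamel_def[abs_def] by (simp add: exp_minus field_simps)
qed

section \<open>A subsolution driven by the boundary flux\<close>

lemma kernel_lower_bound_on_collar_ball:
  assumes z: "z \<in> frontier \<Omega>"
  obtains r m y0 where "r > 0" and "m > 0" and "ball y0 r \<subseteq> collar"
    and "\<And>y. y \<in> ball y0 r \<Longrightarrow> m \<le> J (z - y)"
proof -
  define y0 where "y0 = z + (d / 2) *\<^sub>R \<eta> z"
  have "y0 \<in> collar"
    unfolding y0_def using z d_pos d_less_s0 by (intro normal_coords_in_collar) auto
  then obtain r1 where "r1 > 0" and r1: "ball y0 r1 \<subseteq> collar"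
    using collar_open open_contains_ball by blast
  have "norm (z - y0) < d"
    using norm_\<eta>[OF z] d_pos by (simp add: y0_def)
  then have "J (z - y0) > 0" by (rule J_pos)
  then obtain r2 where "r2 > 0" and r2: "\<And>w. dist w (z - y0) < r2 \<Longrightarrow> dist (J w) (J (z - y0)) < J (z - y0) / 2"
    using J_continuous unfolding continuous_on_iff by (metis UNIV_I half_gt_zero)
  have lower: "J (z - y0) / 2 \<le> J (z - y)" if "y \<in> ball y0 (min r1 r2)" for y
  proof -
    have "dist (J (z - y)) (J (z - y0)) < J (z - y0) / 2"
      using that by (intro r2) (simp add: dist_norm norm_minus_commute)
    then show ?thesis
      unfolding dist_real_def by linarith
  qed
  show ?thesis
  proof (rule that[OF _ _ _ lower])
    show "min r1 r2 > 0" "J (z - y0) / 2 > 0"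
      using \<open>r1 > 0\<close> \<open>r2 > 0\<close> \<open>J (z - y0) > 0\<close> by auto
    show "ball y0 (min r1 r2) \<subseteq> collar"
      using r1 by auto
  qed
qed

lemma exterior_mass_pos:
  assumes "z \<in> frontier \<Omega>"
  shows "0 < exterior_mass z"
proof -
  obtain y0 r m where "r > 0" "m > 0" and B: "ball y0 r \<subseteq> collar"
    and m: "\<And>y. y \<in> ball y0 r \<Longrightarrow> m \<le> J (z - y)"
    using kernel_lower_bound_on_collar_ball[OF assms] by metis
  have lower: "m * indicator (ball y0 r) y \<le> J (z - y) * indicator (- \<Omega>) y" for y
  proof (cases "y \<in> ball y0 r")
    case True
    then have "y \<notin> \<Omega>"
      using B collar_disjoint closure_subset by blast
    then show ?thesis
      using True m[OF True] by simp
  qed (simp add: J_nonneg)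
  have "integral UNIV (\<lambda>y. m * indicator (ball y0 r) y) \<le> exterior_mass z"
    unfolding exterior_mass_def kconv_def
  proof (rule integral_le[OF _ _ lower])
    show "(\<lambda>y. m * indicator (ball y0 r) y) integrable_on UNIV"
      by (intro integrable_on_mult_right) (simp add: integrable_on_indicator)
    show "(\<lambda>y. J (z - y) * indicator (- \<Omega>) y) integrable_on UNIV"
      using \<Omega>_lebesgue by (intro kconv_integrable[of _ 1]) (auto simp: Compl_in_sets_lebesgue)
  qed
  moreover have "integral UNIV (\<lambda>y. m * indicator (ball y0 r) y) = m * measure lebesgue (ball y0 r)"
    by (simp add: integral_indicator)
  moreover have "0 < m * measure lebesgue (ball y0 r)"
    using content_ball_pos \<open>r > 0\<close> \<open>m > 0\<close> by simp
  ultimately show ?thesis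
    by linarith
qed

definition min_exterior_mass :: real where
  "min_exterior_mass = (INF z\<in>frontier \<Omega>. exterior_mass z)"

lemma min_exterior_mass:
  shows "0 < min_exterior_mass" and "min_exterior_mass \<le> 1"
    and "z \<in> frontier \<Omega> \<Longrightarrow> min_exterior_mass \<le> exterior_mass z"
proof -
  have "continuous_on (frontier \<Omega>) exterior_mass"
    unfolding exterior_mass_def[abs_def] using \<Omega>_lebesgue compact_imp_bounded[OF compact_frontier]
    by (intro kconv_continuous_on) (auto simp: Compl_in_sets_lebesgue indicator_def)
  then obtain z0 where z0: "z0 \<in> frontier \<Omega>" "\<And>z. z \<in> frontier \<Omega> \<Longrightarrow> exterior_mass z0 \<le> exterior_mass z"
    using continuous_attains_inf[OF compact_frontier frontier_nonempty] by blast
  then have eq: "min_exterior_mass = exterior_mass z0"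
    unfolding min_exterior_mass_def by (intro cInf_eq_minimum) auto
  show "0 < min_exterior_mass" using exterior_mass_pos[OF z0(1)] eq by simp
  show "min_exterior_mass \<le> 1" using mass_bounds eq by simp
  show "z \<in> frontier \<Omega> \<Longrightarrow> min_exterior_mass \<le> exterior_mass z" using z0 eq by simp
qed

text \<open>\<open>(c t) powr (1 / (1 - p))\<close> solves \<open>\<phi>' = const * \<phi> powr p\<close>; the constant \<open>c\<close> is chosen
  so that \<open>subsolution_identity\<close> holds.\<close>

definition subsolution :: "real \<Rightarrow> real" where
  "subsolution t = (min_exterior_mass / 2 powr (1 / (1 - p) + 1) * t) powr (1 / (1 - p))"

lemma subsolution_identity:
  assumes "0 \<le> t"
  shows "t / 2 * min_exterior_mass * subsolution (t / 2) powr p = 2 * subsolution t"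
proof -
  define r where "r = 1 / (1 - p)"
  define a where "a = min_exterior_mass / 2 powr (r + 1) * (t / 2)"
  have "r * p = r - 1" using p_less_1 by (simp add: r_def field_simps)
  have "0 \<le> a" using assms min_exterior_mass(1) by (simp add: a_def)
  have sub_half: "subsolution (t / 2) = a powr r" and sub: "subsolution t = 2 powr r * a powr r"
    using \<open>0 \<le> a\<close> by (simp_all add: subsolution_def a_def r_def flip: powr_mult)
  have "t / 2 * min_exterior_mass = 2 powr (r + 1) * a"
    by (simp add: a_def)
  then have "t / 2 * min_exterior_mass * subsolution (t / 2) powr p = 2 powr (r + 1) * (a * a powr (r - 1))"
    unfolding sub_half using \<open>0 \<le> a\<close> by (simp add: powr_powr \<open>r * p = r - 1\<close>)
  also have "\<dots> = 2 * subsolution t"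
    using \<open>0 \<le> a\<close> by (cases "a = 0") (simp_all add: sub powr_add powr_diff)
  finally show ?thesis .
qed

lemma subsolution_bounds:
  assumes "t \<in> {0..horizon}"
  shows "0 \<le> subsolution t \<and> subsolution t \<le> 1"
proof -
  have "1 \<le> 2 powr (1 / (1 - p) + 1)"
    using p_less_1 by (intro ge_one_powr_ge_zero) auto
  then have "min_exterior_mass / 2 powr (1 / (1 - p) + 1) * t \<le> 1 * 1"
    using min_exterior_mass(1,2) assms
    by (intro mult_mono) (auto simp: horizon_def divide_le_eq_1)
  then show ?thesis
    using min_exterior_mass(1) assms p_less_1 by (simp add: subsolution_def powr_le1)
qed

lemma subsolution_mono: "0 \<le> s \<Longrightarrow> s \<le> t \<Longrightarrow> subsolution s \<le> subsolution t"
  unfolding subsolution_def using min_exterior_mass(1) p_less_1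
  by (intro powr_mono2 mult_left_mono) auto

lemma subsolution_pos: "0 < t \<Longrightarrow> 0 < subsolution t"
  unfolding subsolution_def using min_exterior_mass(1) by simp

lemma gain_ge_subsolution:
  assumes "admissible u" and "s \<in> {0..horizon}" and z: "z \<in> frontier \<Omega>"
    and below: "\<And>z. z \<in> frontier \<Omega> \<Longrightarrow> subsolution s \<le> u z s"
  shows "min_exterior_mass * subsolution s powr p \<le> gain u z s"
proof -
  let ?c = "subsolution s powr p"
  have c: "0 \<le> ?c \<and> ?c \<le> 1"
    using subsolution_bounds[OF assms(2)] p_pos by (simp add: powr_le1)
  have "kconv (\<lambda>y. ?c * indicator (- \<Omega>) y) z \<le> gain u z s"
    unfolding gain_def
  proof (rule kconv_mono[where M = 1])
    show "(\<lambda>y. ?c * indicator (- \<Omega>) y) \<in> borel_measurable lebesgue"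
      using \<Omega>_lebesgue by (intro borel_measurable_times borel_measurable_indicator) (auto simp: Compl_in_sets_lebesgue)
    show "\<bar>?c * indicator (- \<Omega>) y\<bar> \<le> 1" for y
      using c by (simp add: indicator_def)
    show "\<bar>profile u s y\<bar> \<le> 1" for y
      using profile_bounds[of u s y] admissibleD(1)[OF assms(1) _ assms(2)] by auto
    show "?c * indicator (- \<Omega>) y \<le> profile u s y" if J_ne: "J (z - y) \<noteq> 0" for y
    proof (cases "y \<in> \<Omega>")
      case True
      then show ?thesis
        using profile_bounds[of u s y] admissibleD(1)[OF assms(1) _ assms(2)] by auto
    next
      case False
      then obtain z' where "z' \<in> frontier \<Omega>" "\<And>u t. ext u y t = u z' t"
        using ext_u_near[OF _ False J_ne] z frontier_subset_closure by blast
      then show ?thesis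
        using False below subsolution_bounds[OF assms(2)] p_pos by (simp add: profile_def powr_mono2)
    qed
  qed (use admissibleD(2)[OF assms(1,2)] in auto)
  moreover have "kconv (\<lambda>y. ?c * indicator (- \<Omega>) y) z = ?c * exterior_mass z"
    by (simp add: kconv_cmult exterior_mass_def)
  moreover have "min_exterior_mass * ?c \<le> exterior_mass z * ?c"
    using min_exterior_mass(3)[OF z] c by (intro mult_right_mono) auto
  ultimately show ?thesis
    by (simp add: mult.commute)
qed

lemma duhamel_integrand_ge_subsolution:
  assumes u: "admissible u" and z: "z \<in> frontier \<Omega>" and t: "t \<in> {0..horizon}" and s: "s \<in> {t / 2..t}"
    and below: "\<And>z s. z \<in> frontier \<Omega> \<Longrightarrow> s \<in> {0..horizon} \<Longrightarrow> subsolution s \<le> u z s"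
  shows "min_exterior_mass * subsolution (t / 2) powr p / 2 \<le> exp (- (interior_mass z * (t - s))) * gain u z s"
proof -
  have "interior_mass z * (t - s) \<le> 1 * (1 / 2)"
    using mass_bounds[of z] s t by (intro mult_mono) (auto simp: horizon_def)
  then have "1 / 2 \<le> exp (- (interior_mass z * (t - s)))"
    using exp_ge_add_one_self[of "- (interior_mass z * (t - s))"] by linarith
  moreover have "min_exterior_mass * subsolution (t / 2) powr p \<le> gain u z s"
  proof -
    have "subsolution (t / 2) powr p \<le> subsolution s powr p"
      using s t subsolution_bounds[of "t / 2"] p_pos
      by (intro powr_mono2 subsolution_mono) (auto simp: horizon_def)
    then have "min_exterior_mass * subsolution (t / 2) powr p \<le> min_exterior_mass * subsolution s powr p"
      using min_exterior_mass(1) by simp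
    also have "\<dots> \<le> gain u z s"
      using s t by (intro gain_ge_subsolution u z below) auto
    finally show ?thesis .
  qed
  ultimately have "1 / 2 * (min_exterior_mass * subsolution (t / 2) powr p) \<le> exp (- (interior_mass z * (t - s))) * gain u z s"
    using min_exterior_mass(1) by (intro mult_mono) auto
  then show ?thesis by simp
qed

lemma duhamel_ge_subsolution:
  assumes u: "admissible u" and z: "z \<in> frontier \<Omega>" and t: "t \<in> {0..horizon}"
    and below: "\<And>z s. z \<in> frontier \<Omega> \<Longrightarrow> s \<in> {0..horizon} \<Longrightarrow> subsolution s \<le> u z s"
  shows "subsolution t \<le> duhamel u z t"
proof -
  let ?f = "\<lambda>s. exp (- (interior_mass z * (t - s))) * gain u z s"
  let ?k = "min_exterior_mass * subsolution (t / 2) powr p / 2"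
  have "z \<in> closure \<Omega>" using z frontier_subset_closure by blast
  note f_integral = duhamel_has_integral[OF u this t]
  have f_sub: "?f integrable_on {a..b}" if "0 \<le> a" "b \<le> t" for a b
    by (rule integrable_on_subinterval[OF has_integral_integrable[OF f_integral]]) (use that in auto)
  have "integral {0..t / 2} ?f + integral {t / 2..t} ?f = integral {0..t} ?f"
    using t by (intro Henstock_Kurzweil_Integration.integral_combine has_integral_integrable[OF f_integral]) auto
  then have "duhamel u z t = integral {0..t / 2} ?f + integral {t / 2..t} ?f"
    using integral_unique[OF f_integral] by simp
  moreover have "0 \<le> integral {0..t / 2} ?f"
    using gain_bounds[OF u] t by (intro integral_nonneg f_sub) auto
  moreover have "integral {t / 2..t} (\<lambda>_. ?k) \<le> integral {t / 2..t} ?f"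
    using duhamel_integrand_ge_subsolution[OF u z t _ below] t by (intro integral_le f_sub) auto
  moreover have "integral {t / 2..t} (\<lambda>_. ?k) = (t / 2 * min_exterior_mass * subsolution (t / 2) powr p) / 2"
    using t by simp
  then have "integral {t / 2..t} (\<lambda>_. ?k) = subsolution t"
    using t by (subst (asm) subsolution_identity) auto
  ultimately show ?thesis
    by linarith
qed

section \<open>Monotone iteration\<close>

definition seed :: "'a \<Rightarrow> real \<Rightarrow> real" where
  "seed x t = (if x \<in> frontier \<Omega> then subsolution t else 0)"

lemma profile_seed:
  "profile seed t y = subsolution t powr p * (indicator (- \<Omega>) y * ext (\<lambda>_ _. 1) y 0)"
proof (cases "y \<in> \<Omega>")
  case True
  then show ?thesis using frontier_disjoint by (auto simp: profile_def seed_def)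
next
  case False
  then show ?thesis
  proof (cases rule: ext_u_cases[of y])
    case (1 z)
    then show ?thesis using False by (simp add: profile_def seed_def)
  qed (use False p_pos in \<open>simp add: profile_def\<close>)
qed

lemma seed_admissible: "admissible seed"
  unfolding admissible_def
proof (intro conjI ballI)
  show "0 \<le> seed y t" "seed y t \<le> 1" if "t \<in> {0..horizon}" for y t
    using subsolution_bounds[OF that] by (auto simp: seed_def)
  have "(\<lambda>y. ext (\<lambda>_ _. 1) y 0) \<in> borel_measurable borel"
    by (intro ext_u_measurable) simp
  then have "(\<lambda>y. indicator (- \<Omega>) y * ext (\<lambda>_ _. 1) y 0) \<in> borel_measurable lborel"
    using \<Omega>_open by measurable
  then have E: "(\<lambda>y. indicator (- \<Omega>) y * ext (\<lambda>_ _. 1) y 0) \<in> borel_measurable lebesgue"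
    by (rule measurable_completion)
  then show "profile seed t \<in> borel_measurable lebesgue" for t
    unfolding profile_seed by measurable
  have "continuous_on {0..horizon} (\<lambda>s. subsolution s powr p)"
    unfolding subsolution_def using min_exterior_mass(1) p_pos p_less_1
    by (intro continuous_on_powr' continuous_intros) auto
  then have "continuous_on {0..horizon} (\<lambda>s. subsolution s powr p * kconv (\<lambda>y. indicator (- \<Omega>) y * ext (\<lambda>_ _. 1) y 0) x)"
    for x by (rule continuous_on_mult_right)
  then show "gain seed x \<in> borel_measurable (lebesgue_on {0..horizon})" for x
    unfolding gain_def[abs_def] profile_seed kconv_cmult
    by (intro continuous_imp_measurable_on_sets_lebesgue) auto
qed

definition iterate :: "nat \<Rightarrow> 'a \<Rightarrow> real \<Rightarrow> real" where
  "iterate n = (duhamel ^^ n) seed"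

lemma iterate_0 [simp]: "iterate 0 = seed"
  and iterate_Suc [simp]: "iterate (Suc n) = duhamel (iterate n)"
  by (simp_all add: iterate_def)

lemma iterate_admissible: "admissible (iterate n)"
  by (induction n) (simp_all add: seed_admissible continuous_state_admissible duhamel_continuous_state)

lemma iterate_above_subsolution:
  "z \<in> frontier \<Omega> \<Longrightarrow> s \<in> {0..horizon} \<Longrightarrow> subsolution s \<le> iterate n z s"
proof (induction n arbitrary: z s)
  case 0
  then show ?case by (simp add: seed_def)
next
  case (Suc n)
  show ?case
    using duhamel_ge_subsolution[OF iterate_admissible Suc.prems Suc.IH] by simp
qed

lemma iterate_incseq:
  "y \<in> closure \<Omega> \<Longrightarrow> s \<in> {0..horizon} \<Longrightarrow> iterate n y s \<le> iterate (Suc n) y s"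
proof (induction n arbitrary: y s)
  case 0
  then show ?case
    using iterate_above_subsolution[of y s 1] duhamel_bounds[OF seed_admissible, of y s]
    by (auto simp: seed_def)
next
  case (Suc n)
  show ?case
    using duhamel_mono[OF iterate_admissible iterate_admissible Suc.prems Suc.IH] by simp
qed

definition solution :: "'a \<Rightarrow> real \<Rightarrow> real" where
  "solution x t = (SUP n. iterate n x t)"

lemma iterate_tendsto:
  assumes "y \<in> closure \<Omega>" and "s \<in> {0..horizon}"
  shows "(\<lambda>n. iterate n y s) \<longlonglongrightarrow> solution y s"
  unfolding solution_def
proof (rule LIMSEQ_incseq_SUP)
  show "bdd_above (range (\<lambda>n. iterate n y s))"
    using admissibleD(1)[OF iterate_admissible assms] by (intro bdd_aboveI[of _ 1]) auto
  show "incseq (\<lambda>n. iterate n y s)"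
    using iterate_incseq[OF assms] by (simp add: incseq_SucI)
qed

lemma iterate_le_solution:
  assumes "y \<in> closure \<Omega>" and "s \<in> {0..horizon}"
  shows "iterate n y s \<le> solution y s"
  using iterate_incseq[OF assms] iterate_tendsto[OF assms]
  by (intro incseq_le) (auto simp: incseq_SucI)

lemma solution_bounds:
  assumes "y \<in> closure \<Omega>" and "s \<in> {0..horizon}"
  shows "0 \<le> solution y s \<and> solution y s \<le> 1"
  using admissibleD(1)[OF iterate_admissible assms] iterate_le_solution[OF assms, of 0]
    LIMSEQ_le_const2[OF iterate_tendsto[OF assms]]
  by (meson order_trans)

lemma profile_iterate_tendsto:
  assumes "s \<in> {0..horizon}"
  shows "(\<lambda>n. profile (iterate n) s y) \<longlonglongrightarrow> profile solution s y"
proof (cases "y \<in> \<Omega>")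
  case True
  then show ?thesis
    using iterate_tendsto[OF _ assms] closure_subset by (auto simp: profile_def)
next
  case False
  then show ?thesis
  proof (cases rule: ext_u_cases[of y])
    case (1 z)
    then have "z \<in> closure \<Omega>" using frontier_subset_closure by blast
    then have "(\<lambda>n. iterate n z s powr p) \<longlonglongrightarrow> solution z s powr p"
      using iterate_tendsto[OF _ assms] admissibleD(1)[OF iterate_admissible _ assms] p_pos
      by (intro tendsto_powr') auto
    then show ?thesis using False 1(2) by (simp add: profile_def)
  qed (simp add: profile_def False)
qed

lemma gain_iterate_tendsto:
  assumes "s \<in> {0..horizon}"
  shows "(\<lambda>n. gain (iterate n) x s) \<longlonglongrightarrow> gain solution x s"
  unfolding gain_def
proof (rule kconv_tendsto[where M = 1])
  show "profile (iterate n) s \<in> borel_measurable lebesgue" for n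
    using admissibleD(2)[OF iterate_admissible assms] .
  show "\<bar>profile (iterate n) s y\<bar> \<le> 1" for n y
    using profile_bounds[of "iterate n" s y] admissibleD(1)[OF iterate_admissible _ assms] by auto
qed (rule profile_iterate_tendsto[OF assms])

lemma solution_admissible: "admissible solution"
  unfolding admissible_def
proof (intro conjI ballI)
  show "0 \<le> solution y t" "solution y t \<le> 1" if "y \<in> closure \<Omega>" "t \<in> {0..horizon}" for y t
    using solution_bounds[OF that] by auto
  show "profile solution t \<in> borel_measurable lebesgue" if "t \<in> {0..horizon}" for t
    using profile_iterate_tendsto[OF that] admissibleD(2)[OF iterate_admissible that]
    by (rule borel_measurable_LIMSEQ_real)
  show "gain solution x \<in> borel_measurable (lebesgue_on {0..horizon})" if "x \<in> closure \<Omega>" for x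
  proof (rule borel_measurable_LIMSEQ_real)
    show "(\<lambda>n. gain (iterate n) x s) \<longlonglongrightarrow> gain solution x s" if "s \<in> space (lebesgue_on {0..horizon})" for s
      using that by (intro gain_iterate_tendsto) auto
  qed (rule admissibleD(3)[OF iterate_admissible that])
qed

lemma duhamel_iterate_tendsto:
  assumes "x \<in> closure \<Omega>" and "t \<in> {0..horizon}"
  shows "(\<lambda>n. duhamel (iterate n) x t) \<longlonglongrightarrow> duhamel solution x t"
proof -
  have "(\<lambda>n. integral {0..t} (\<lambda>s. exp (interior_mass x * s) * gain (iterate n) x s))
      \<longlonglongrightarrow> integral {0..t} (\<lambda>s. exp (interior_mass x * s) * gain solution x s)"
  proof (rule dominated_convergence)
    show "(\<lambda>s. exp (interior_mass x * s) * gain (iterate n) x s) integrable_on {0..t}" for n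
      using assms by (intro duhamel_integrand_integrable iterate_admissible) auto
    show "(\<lambda>s. exp 1) integrable_on {0..t}"
      by (rule integrable_const_ivl)
    show "norm (exp (interior_mass x * s) * gain (iterate n) x s) \<le> exp 1" if "s \<in> {0..t}" for n s
      using duhamel_integrand_bounds[OF iterate_admissible, of s x n] that assms(2) by simp
    show "(\<lambda>n. exp (interior_mass x * s) * gain (iterate n) x s) \<longlonglongrightarrow> exp (interior_mass x * s) * gain solution x s"
      if "s \<in> {0..t}" for s
      using that assms(2) by (intro tendsto_mult_left gain_iterate_tendsto) auto
  qed
  then show ?thesis
    unfolding duhamel_def by (rule tendsto_mult_left)
qed

lemma solution_fixed_point:
  assumes "x \<in> closure \<Omega>" and "t \<in> {0..horizon}"
  shows "duhamel solution x t = solution x t"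
  using duhamel_iterate_tendsto[OF assms] LIMSEQ_Suc[OF iterate_tendsto[OF assms]]
  by (simp add: LIMSEQ_unique)

lemma solution_continuous_state: "continuous_state solution"
proof -
  have "continuous_on (closure \<Omega> \<times> {0..horizon}) (\<lambda>(x, t). duhamel solution x t)"
    by (rule duhamel_continuous[OF solution_admissible])
  then have "continuous_on (closure \<Omega> \<times> {0..horizon}) (\<lambda>(x, t). solution x t)"
    by (rule continuous_on_eq) (auto simp: solution_fixed_point)
  then show ?thesis
    using solution_bounds by (simp add: continuous_state_def)
qed

lemma solution_is_solution_P: "is_solution_P \<Omega> J \<eta> s0 p (\<lambda>x. 0) horizon solution"
  unfolding is_solution_P_def
proof (intro conjI ballI)
  show "0 \<le> solution x t" if "x \<in> closure \<Omega>" "t \<in> {0..<horizon}" for x t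
    using solution_bounds[of x t] that by auto
  show "continuous_on (closure \<Omega> \<times> {0..<horizon}) (\<lambda>(x, t). solution x t)"
    using solution_continuous_state unfolding continuous_state_def
    by (rule continuous_on_subset[OF conjunct1]) auto
  show "solution x 0 = 0" if "x \<in> closure \<Omega>" for x
    using solution_fixed_point[OF that] duhamel_bounds[OF solution_admissible that, of 0]
    by (simp add: horizon_def)
  fix x t assume x: "x \<in> closure \<Omega>" and t: "t \<in> {0..<horizon}"
  then have "t \<in> {0..horizon}" by simp
  have "(duhamel solution x has_real_derivative gain solution x t - interior_mass x * solution x t)
      (at t within {0..horizon})"
    using duhamel_has_derivative[OF solution_continuous_state \<open>t \<in> {0..horizon}\<close>, of x]
    by (simp add: solution_fixed_point[OF x \<open>t \<in> {0..horizon}\<close>])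
  then have "(solution x has_real_derivative gain solution x t - interior_mass x * solution x t)
      (at t within {0..horizon})"
    by (rule has_field_derivative_transform_within[OF _ zero_less_one \<open>t \<in> {0..horizon}\<close>])
      (simp add: solution_fixed_point[OF x])
  then show "(solution x has_real_derivative
      integral \<Omega> (\<lambda>y. J (x - y) * (solution y t - solution x t))
      + integral (- \<Omega>) (\<lambda>y. J (x - y) * ext solution y t powr p)) (at t within {0..<horizon})"
    unfolding gain_minus_loss[OF solution_admissible x \<open>t \<in> {0..horizon}\<close>]
    by (rule has_field_derivative_subset) auto
qed

theorem exists_nontrivial_solution:
  "\<exists>t0 > 0. \<exists>u. is_solution_P \<Omega> J \<eta> s0 p (\<lambda>x. 0) t0 u \<and> (\<exists>x\<in>closure \<Omega>. \<exists>t\<in>{0..<t0}. u x t \<noteq> 0)"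
proof -
  obtain z where z: "z \<in> frontier \<Omega>" using frontier_nonempty by blast
  then have "z \<in> closure \<Omega>" using frontier_subset_closure by blast
  have "0 < subsolution (horizon / 2)"
    by (rule subsolution_pos) (simp add: horizon_def)
  also have "\<dots> \<le> solution z (horizon / 2)"
    using iterate_le_solution[OF \<open>z \<in> closure \<Omega>\<close>, of "horizon / 2" 0] z by (simp add: seed_def horizon_def)
  finally have "solution z (horizon / 2) \<noteq> 0" by simp
  moreover have "horizon / 2 \<in> {0..<horizon}" "0 < horizon"
    by (simp_all add: horizon_def)
  ultimately show ?thesis
    using solution_is_solution_P \<open>z \<in> closure \<Omega>\<close> by blast
qed

end

theorem proposition5p3:
  fixes \<Omega> :: "'a::euclidean_space set" and J :: "'a \<Rightarrow> real" and \<eta> :: "'a \<Rightarrow> 'a"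
    and d s0 p :: real
  assumes "kernel_ok J d" and "domain_ok \<Omega> \<eta> s0 d"
    and "0 < p" and "p < 1"
  shows "\<exists>t0 > 0. \<exists>u. is_solution_P \<Omega> J \<eta> s0 p (\<lambda>x. 0) t0 u
           \<and> (\<exists>x\<in>closure \<Omega>. \<exists>t\<in>{0..<t0}. u x t \<noteq> 0)"
proof -
  interpret nonlocal_flux_problem J d \<Omega> \<eta> s0 p
    using assms by unfold_locales
  show ?thesis
    by (rule exists_nontrivial_solution)
qed

end
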